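(* Let $Q_{R,d}$ and $Q_R$ be formal Laurent series in $\mathbb{Q}((x))$, for all data $R$ and all $d\in\mathbb{Z}$, satisfying for every $R$ and $d$ $$Q_R(x)=\sum_{r\ge1}\sum_{I:\ \ell(I)=r}\ \sum_{(d_1,\dots,d_r)}x^{N_R(I;d_1,\dots,d_r)}\prod_{k=1}^rQ_{R^I_k,d_k}(x),$$ with $(d_1,\dots,d_r)\in\mathbb{Z}^r$, $\sum d_i=d$, $\frac{d_1+\alpha(R^I_1)}{n(R^I_1)}>\dots>\frac{d_r+\alpha(R^I_r)}{n(R^I_r)}$. For a real $\lambda$ put $$Q^\lambda_{R,d}(x)=\sum_{r\ge1}\sum_{I:\ \ell(I)=r}\ \sum_{(d_1,\dots,d_r)}^{(\lambda)}x^{N_R(I;d_1,\dots,d_r)}\prod_{k=1}^rQ_{R^I_k,d_k}(x),$$ where the inner sum is over $(d_1,\dots,d_r)\in\mathbb{Z}^r$ with $\sum d_i=d$ and $\lambda\ge\frac{d_1+\alpha(R^I_1)}{n(R^I_1)}>\frac{d_2+\alpha(R^I_2)}{n(R^I_2)}>\dots>\frac{d_r+\alpha(R^I_r)}{n(R^I_r)}$, and $$S^\lambda_{R,d}(x)=\sum_{r\ge1}\sum_{I:\ \ell(I)=r}\frac{x^{M'_R(I;d)+M_R(I;\lambda)}}{(x^{n(R^I_1)+n(R^I_2)}-1)\cdots(x^{n(R^I_{r-1})+n(R^I_r)}-1)}\prod_{k=1}^rQ_{R^I_k}(x).$$ Then $Q^\lambda_{R,d}=S^\lambda_{R,d}$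 for every data $R$, every $d\in\mathbb{Z}$ and every real $\lambda\ge(d+\alpha(R))/n(R)$.
   Context: Fix a finite set $S$, integers $m_P\ge1$ ($P\in S$) and reals $0\le\alpha^P_1<\dots<\alpha^P_{m_P}<1$. A data $R=(R^P_i)$ is a family of non-negative integers with $n(R)=\sum_iR^P_i$ positive and independent of $P$; $\alpha(R)=\sum_P\sum_iR^P_i\alpha^P_i$. A partition of $R$ of length $r=\ell(I)$ is a family of non-negative integers $I^P_{i,k}$, $1\le k\le r$, with $\sum_kI^P_{i,k}=R^P_i$, $\sum_iI^P_{i,k}$ independent of $P$, and for each $k$ some $I^P_{i,k}\ne0$; $(R^I_k)^P_i=I^P_{i,k}$, $(R^I_{\le k})^P_i=\sum_{k'\le k}I^P_{i,k'}$. Define $\sigma_R(I)=\sum_{P\in S}\sum_{k>l,\ i>t}I^P_{i,k}I^P_{t,l}$, $N_R(I;d_1,\dots,d_r)=\sum_{k>l}(d_ln(R^I_k)-d_kn(R^I_l))-\sigma_R(I)$, $M'_R(I;d)=-(n(R)-n(R^I_r))d-\sigma_R(I)+(2n(R)-n(R^I_1)-n(R^I_r))$, and $M_R(I;\lambda)=\sum_{k=1}^{r-1}(n(R^I_k)+n(R^I_{k+1}))[n(R^I_{\le k})\lambda-\alpha(R^I_{\le k})]$, with $[y]$ the integer part. Factors $1/(x^a-1)$ are expanded in $\mathbb{Q}((x))$. *)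

theory Defs
  imports "HOL-Analysis.Infinite_Sum" "HOL-Computational_Algebra.Formal_Laurent_Series"
begin

text \<open>Points P range over a finite set S of type 'p; a datum R is the function
  P, i \<mapsto> R^P_i (for P in S, 1 \<le> i \<le> m P), normalised to be 0 outside that domain.\<close>

type_synonym 'p data = "'p \<Rightarrow> nat \<Rightarrow> nat"

definition is_data :: "'p set \<Rightarrow> ('p \<Rightarrow> nat) \<Rightarrow> 'p data \<Rightarrow> bool" where
  "is_data S m R \<longleftrightarrow>
     (\<forall>P i. (P \<notin> S \<or> i < 1 \<or> m P < i) \<longrightarrow> R P i = 0) \<and>
     (\<exists>n>0. \<forall>P\<in>S. (\<Sum>i=1..m P. R P i) = n)"

text \<open>n(R) (evaluated at some point of S; independent of the point for data)\<close>
definition dn :: "'p set \<Rightarrow> ('p \<Rightarrow> nat) \<Rightarrow> 'p data \<Rightarrow> nat" where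
  "dn S m R = (\<Sum>i=1..m (SOME P. P \<in> S). R (SOME P. P \<in> S) i)"

definition dalpha :: "'p set \<Rightarrow> ('p \<Rightarrow> nat) \<Rightarrow> ('p \<Rightarrow> nat \<Rightarrow> real) \<Rightarrow> 'p data \<Rightarrow> real" where
  "dalpha S m \<alpha> R = (\<Sum>P\<in>S. \<Sum>i=1..m P. real (R P i) * \<alpha> P i)"

text \<open>A partition I of R of length r is encoded as the list [R^I_1, ..., R^I_r]
  (0-based list index k-1 for the paper's index k).\<close>
definition is_partition :: "'p set \<Rightarrow> ('p \<Rightarrow> nat) \<Rightarrow> 'p data \<Rightarrow> 'p data list \<Rightarrow> bool" where
  "is_partition S m R Is \<longleftrightarrow>
     Is \<noteq> [] \<and> (\<forall>Rk\<in>set Is. is_data S m Rk) \<and>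
     (\<forall>P i. R P i = (\<Sum>k<length Is. (Is ! k) P i))"

definition prefix_data :: "'p data list \<Rightarrow> nat \<Rightarrow> 'p data" where
  "prefix_data Is k = (\<lambda>P i. \<Sum>j<k. (Is ! j) P i)"

definition sigma :: "'p set \<Rightarrow> ('p \<Rightarrow> nat) \<Rightarrow> 'p data list \<Rightarrow> int" where
  "sigma S m Is = (\<Sum>P\<in>S. \<Sum>k<length Is. \<Sum>l<k. \<Sum>i\<in>{1..m P}. \<Sum>t\<in>{1..<i}.
       int ((Is ! k) P i) * int ((Is ! l) P t))"

definition Nexp :: "'p set \<Rightarrow> ('p \<Rightarrow> nat) \<Rightarrow> 'p data list \<Rightarrow> int list \<Rightarrow> int" where
  "Nexp S m Is ds =
     (\<Sum>k<length Is. \<Sum>l<k. ds ! l * int (dn S m (Is ! k)) - ds ! k * int (dn S m (Is ! l)))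
     - sigma S m Is"

definition M'exp :: "'p set \<Rightarrow> ('p \<Rightarrow> nat) \<Rightarrow> 'p data \<Rightarrow> 'p data list \<Rightarrow> int \<Rightarrow> int" where
  "M'exp S m R Is d =
     - (int (dn S m R) - int (dn S m (last Is))) * d - sigma S m Is
     + (2 * int (dn S m R) - int (dn S m (hd Is)) - int (dn S m (last Is)))"

definition Mexp :: "'p set \<Rightarrow> ('p \<Rightarrow> nat) \<Rightarrow> ('p \<Rightarrow> nat \<Rightarrow> real) \<Rightarrow> 'p data list \<Rightarrow> real \<Rightarrow> int" where
  "Mexp S m \<alpha> Is lam =
     (\<Sum>k\<in>{1..<length Is}. int (dn S m (Is ! (k - 1)) + dn S m (Is ! k)) *
        \<lfloor>real (dn S m (prefix_data Is k)) * lam - dalpha S m \<alpha> (prefix_data Is k)\<rfloor>)"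

definition slope :: "'p set \<Rightarrow> ('p \<Rightarrow> nat) \<Rightarrow> ('p \<Rightarrow> nat \<Rightarrow> real) \<Rightarrow> 'p data \<Rightarrow> int \<Rightarrow> real" where
  "slope S m \<alpha> R d = (real_of_int d + dalpha S m \<alpha> R) / real (dn S m R)"

definition Dset :: "'p set \<Rightarrow> ('p \<Rightarrow> nat) \<Rightarrow> ('p \<Rightarrow> nat \<Rightarrow> real) \<Rightarrow> 'p data \<Rightarrow> int
                    \<Rightarrow> ('p data list \<times> int list) set" where
  "Dset S m \<alpha> R d = {(Is, ds). is_partition S m R Is \<and> length ds = length Is \<and> sum_list ds = d \<and>
      (\<forall>k. Suc k < length Is \<longrightarrow>
         slope S m \<alpha> (Is ! k) (ds ! k) > slope S m \<alpha> (Is ! Suc k) (ds ! Suc k))}"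

definition qterm :: "'p set \<Rightarrow> ('p \<Rightarrow> nat) \<Rightarrow> ('p data \<Rightarrow> int \<Rightarrow> rat fls)
                    \<Rightarrow> 'p data list \<Rightarrow> int list \<Rightarrow> rat fls" where
  "qterm S m Q Is ds = fls_X_intpow (Nexp S m Is ds) * (\<Prod>k<length Is. Q (Is ! k) (ds ! k))"

definition Slam :: "'p set \<Rightarrow> ('p \<Rightarrow> nat) \<Rightarrow> ('p \<Rightarrow> nat \<Rightarrow> real) \<Rightarrow> ('p data \<Rightarrow> rat fls)
                    \<Rightarrow> 'p data \<Rightarrow> int \<Rightarrow> real \<Rightarrow> rat fls" where
  "Slam S m \<alpha> Q R d lam =
     (\<Sum>Is\<in>{Is. is_partition S m R Is}.
        fls_X_intpow (M'exp S m R Is d + Mexp S m \<alpha> Is lam) *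
        (\<Prod>k\<in>{1..<length Is}. inverse (fls_X ^ (dn S m (Is ! (k - 1)) + dn S m (Is ! k)) - 1)) *
        (\<Prod>k<length Is. Q (Is ! k)))"

end

theory Submission
  imports Defs "HOL-Library.Function_Algebras"
begin

(* Both sides are step functions of lam for lam >= mu(R,d). The truncated sum Q^lam only changes when
   lam crosses a slope mu(X,e) = (e + alpha(X))/n(X) of a subdatum X <= R, and so do the floors in
   M_R(I;lam). At such a wall nu, the terms leaving Q^lam are those whose first part has slope nu;
   splitting that part off gives x^(...) Q_{X,e} Q^(nu-)_{R-X,d-e}. The terms of S^lam change at the
   cuts k where n(R^I_{<=k}) nu - alpha(R^I_{<=k}) is an integer: there the exponent jumps by
   n(R^I_k) + n(R^I_{k+1}), cancelling one denominator, and cutting I at k gives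
   x^(...) S^nu_{X,e} S^(nu-)_{R-X,d-e}. By induction on n(R) the two jumps agree, so Q^lam - S^lam
   is constant. As lam -> oo, Q^lam -> Q_R by hypothesis, while every term of S^lam with r >= 2 tends
   to 0 since M_R(I;lam) -> oo; the remaining term is Q_R, so the constant is 0. *)

(* Data are added pointwise; left as simp rules, these would eta-expand every sum of data. *)
declare plus_fun_apply [simp del] zero_fun_apply [simp del]

lemma sum_list_fun_apply: "sum_list fs x = sum_list (map (\<lambda>f. f x) fs)"
  by (induction fs) (simp_all add: plus_fun_apply zero_fun_apply)

lemma sum_list_map_conv_sum_nth: "sum_list (map f xs) = (\<Sum>k<length xs. f (xs ! k))"
  by (simp add: sum_list_sum_nth atLeast0LessThan)

lemma prod_list_map_conv_prod_nth: "prod_list (map f xs) = (\<Prod>k<length xs. f (xs ! k))"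
  by (induction xs) (simp_all add: prod.lessThan_Suc_shift del: prod.lessThan_Suc)

lemma sum_list_ge_length_times:
  fixes xs :: "int list"
  assumes "\<forall>x\<in>set xs. x \<le> B" "0 \<le> B" "y \<in> set xs"
  shows "sum_list xs - int (length xs) * B \<le> y"
  using assms
proof (induction xs)
  case (Cons x xs)
  have "sum_list xs \<le> int (length xs) * B"
    using Cons.prems(1) sum_list_mono[of xs "\<lambda>x. x" "\<lambda>_. B"] by (simp add: sum_list_triv)
  then show ?case
    using Cons by (cases "y = x") (auto simp: algebra_simps)
qed simp

lemma sum_atLeastLessThan_split_at:
  fixes f :: "nat \<Rightarrow> 'a::comm_monoid_add"
  assumes "1 \<le> c" "c < r"
  shows "(\<Sum>k\<in>{1..<r}. f k) = (\<Sum>k\<in>{1..<c}. f k) + f c + (\<Sum>j\<in>{1..<r-c}. f (c + j))"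
proof -
  have "(\<Sum>k\<in>{1..<r}. f k) = (\<Sum>k\<in>{1..<c}. f k) + (\<Sum>k\<in>{c..<r}. f k)"
    using assms sum.atLeastLessThan_concat[of 1 c r f] by simp
  also have "(\<Sum>k\<in>{c..<r}. f k) = f c + (\<Sum>k\<in>{Suc c..<r}. f k)"
    using assms by (simp add: sum.atLeast_Suc_lessThan)
  also have "(\<Sum>k\<in>{Suc c..<r}. f k) = (\<Sum>j\<in>{1..<r-c}. f (c + j))"
    using sum.shift_bounds_nat_ivl[of f 1 c "r-c"] assms by (simp add: add.commute)
  finally show ?thesis by (simp add: add.assoc)
qed

lemma prod_atLeastLessThan_remove_split:
  fixes f :: "nat \<Rightarrow> 'a::comm_monoid_mult"
  assumes "1 \<le> c" "c < r"
  shows "(\<Prod>k\<in>{1..<r}-{c}. f k) = (\<Prod>k\<in>{1..<c}. f k) * (\<Prod>j\<in>{1..<r-c}. f (c + j))"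
proof -
  have "{1..<r}-{c} = {1..<c} \<union> {Suc c..<r}" using assms by auto
  then have "(\<Prod>k\<in>{1..<r}-{c}. f k) = (\<Prod>k\<in>{1..<c}. f k) * (\<Prod>k\<in>{Suc c..<r}. f k)"
    by (simp add: prod.union_disjoint)
  also have "(\<Prod>k\<in>{Suc c..<r}. f k) = (\<Prod>j\<in>{1..<r-c}. f (c + j))"
    using prod.shift_bounds_nat_ivl[of f 1 c "r-c"] assms by (simp add: add.commute)
  finally show ?thesis .
qed

lemma sum_adjacent_pairs:
  fixes f :: "nat \<Rightarrow> nat"
  assumes "1 \<le> r"
  shows "(\<Sum>k\<in>{1..<r}. f (k - 1) + f k) + f 0 + f (r - 1) = 2 * (\<Sum>k<r. f k)"
  using assms
proof (induction r rule: nat_induct_at_least)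
  case (Suc r)
  then show ?case
    by (simp add: sum.atLeastLessThan_Suc)
qed simp

lemma sum_Sigma_eq:
  "finite A \<Longrightarrow> (\<And>x. x \<in> A \<Longrightarrow> finite (B x)) \<Longrightarrow> sum f (Sigma A B) = (\<Sum>x\<in>A. \<Sum>y\<in>B x. f (x, y))"
  by (subst sum.Sigma) auto

lemma step_function_constant:
  fixes f :: "real \<Rightarrow> 'a"
  assumes finite_jumps: "\<And>a b. finite (C \<inter> {a<..b})"
    and const: "\<And>a b. l0 \<le> a \<Longrightarrow> a \<le> b \<Longrightarrow> C \<inter> {a<..b} = {} \<Longrightarrow> f b = f a"
    and left_const: "\<And>\<nu>. \<nu> \<in> C \<Longrightarrow> l0 < \<nu> \<Longrightarrow> \<exists>\<delta>>0. \<forall>t. 0 < t \<and> t \<le> \<delta> \<longrightarrow> f (\<nu> - t) = f \<nu>"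
    and "l0 \<le> l"
  shows "f l = f l0"
  using \<open>l0 \<le> l\<close>
proof (induction "card (C \<inter> {l0<..l})" arbitrary: l rule: less_induct)
  case less
  show ?case
  proof (cases "C \<inter> {l0<..l} = {}")
    case True
    then show ?thesis using const[of l0 l] less.prems by simp
  next
    case False
    define \<nu> where "\<nu> = Max (C \<inter> {l0<..l})"
    have \<nu>: "\<nu> \<in> C" "l0 < \<nu>" "\<nu> \<le> l"
      using Max_in[OF finite_jumps False] by (auto simp: \<nu>_def)
    have "C \<inter> {\<nu><..l} = {}"
      using Max_ge[OF finite_jumps, of _ l0 l] \<nu>(2) unfolding \<nu>_def[symmetric] by fastforce
    then have "f l = f \<nu>" using const[of \<nu> l] \<nu> by simp
    obtain \<delta> where "\<delta> > 0" and \<delta>: "\<And>t. 0 < t \<Longrightarrow> t \<le> \<delta> \<Longrightarrow> f (\<nu> - t) = f \<nu>"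
      using left_const \<nu> by blast
    define t where "t = min \<delta> ((\<nu> - l0) / 2)"
    have t: "0 < t" "t \<le> \<delta>" "t < \<nu> - l0"
      using \<open>\<delta> > 0\<close> \<nu> by (auto simp: t_def min_def)
    have "\<nu> \<in> C \<inter> {l0<..l}" "\<nu> \<notin> C \<inter> {l0<..\<nu> - t}" "C \<inter> {l0<..\<nu> - t} \<subseteq> C \<inter> {l0<..l}"
      using \<nu> t by auto
    then have "C \<inter> {l0<..\<nu> - t} \<subset> C \<inter> {l0<..l}"
      by blast
    then have "f (\<nu> - t) = f l0"
      using less.hyps[of "\<nu> - t"] psubset_card_mono[OF finite_jumps] t by simp
    then show ?thesis using \<open>f l = f \<nu>\<close> \<delta>[OF t(1,2)] by simp
  qed
qed

lemma fls_X_power_minus_1_neq_0: "0 < n \<Longrightarrow> (fls_X ^ n - 1 :: 'a::ring_1 fls) \<noteq> 0"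
proof
  assume "0 < n" "(fls_X ^ n - 1 :: 'a fls) = 0"
  then have "fls_subdegree (fls_X ^ n :: 'a fls) = fls_subdegree (1 :: 'a fls)" by simp
  then show False using \<open>0 < n\<close> by simp
qed

lemma fls_X_power_conv_intpow: "(fls_X ^ n :: 'a::ring_1 fls) = fls_X_intpow (int n)"
  by (simp add: fls_X_power_conv_shift_1)

lemma LIMSEQ_imp_eventually_fls_nth_eq:
  fixes f :: "nat \<Rightarrow> 'a::group_add fls"
  assumes "f \<longlonglongrightarrow> L"
  shows "\<forall>\<^sub>F j in sequentially. \<forall>k<N. fls_nth (f j) k = fls_nth L k"
proof -
  have "\<forall>\<^sub>F j in sequentially. dist (f j) L < inverse (2 ^ nat N)"
    using assms unfolding tendsto_iff by simp
  then show ?thesis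
  proof (rule eventually_mono)
    fix j assume close: "dist (f j) L < inverse (2 ^ nat N)"
    show "\<forall>k<N. fls_nth (f j) k = fls_nth L k"
    proof (cases "f j = L")
      case False
      define sd where "sd = fls_subdegree (f j - L)"
      have "0 \<le> sd"
      proof (rule ccontr)
        assume "\<not> 0 \<le> sd"
        then have "dist (f j) L = 2 ^ nat (- sd)"
          using False by (simp add: dist_fls_def sd_def)
        moreover have "inverse (2 ^ nat N) \<le> (1::real)"
          by (simp add: inverse_le_1_iff)
        ultimately show False
          using close one_le_power[of "2::real" "nat (- sd)"] by linarith
      qed
      then have "inverse (2 ^ nat sd) < (inverse (2 ^ nat N) :: real)"
        using close False by (simp add: dist_fls_def sd_def)
      then have "N \<le> sd" by (simp add: \<open>0 \<le> sd\<close>)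
      then show ?thesis
        using fls_eq0_below_subdegree[of _ "f j - L"] by (auto simp: sd_def)
    qed simp
  qed
qed

lemma eventually_fls_nth_X_intpow_times_eq_0:
  fixes g :: "nat \<Rightarrow> int" and K :: "'a::ring_1 fls"
  assumes "filterlim g at_top sequentially"
  shows "\<forall>\<^sub>F j in sequentially. \<forall>k<N. fls_nth (fls_X_intpow (g j) * K) k = 0"
proof (cases "K = 0")
  case False
  have "\<forall>\<^sub>F j in sequentially. N - fls_subdegree K \<le> g j"
    using assms by (simp add: filterlim_at_top)
  then show ?thesis
    by (rule eventually_mono) (auto simp: fls_X_intpow_times_conv_shift intro!: fls_eq0_below_subdegree)
qed simp

section \<open>Data and partitions\<close>

lemma sum_list_data_apply: "sum_list (Is :: 'p data list) P i = (\<Sum>k<length Is. (Is ! k) P i)"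
  unfolding sum_list_fun_apply map_map comp_def by (rule sum_list_map_conv_sum_nth)

lemma prefix_data_eq_sum_take:
  assumes "k \<le> length Is"
  shows "prefix_data Is k = sum_list (take k Is)"
proof (intro ext)
  fix P i
  show "prefix_data Is k P i = sum_list (take k Is) P i"
    using assms unfolding prefix_data_def sum_list_data_apply by (intro sum.cong) auto
qed

lemma data_add_diff_inverse: "X \<le> (R :: 'p data) \<Longrightarrow> X + (R - X) = R"
  by (simp add: le_fun_def fun_eq_iff plus_fun_apply)

lemma data_diff_le: "R - X \<le> (R :: 'p data)"
  by (simp add: le_fun_def)

lemma member_le_sum_list_data: "X \<in> set (Is :: 'p data list) \<Longrightarrow> X \<le> sum_list Is"
  by (simp add: le_fun_def sum_list_fun_apply member_le_sum_list)

locale data_space =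
  fixes S :: "'p set" and m :: "'p \<Rightarrow> nat" and \<alpha> :: "'p \<Rightarrow> nat \<Rightarrow> real"
  assumes finite_S: "finite S" and S_nonempty: "S \<noteq> {}"
begin

abbreviation datum :: "'p data \<Rightarrow> bool" where "datum \<equiv> is_data S m"
abbreviation rank :: "'p data \<Rightarrow> nat" where "rank \<equiv> dn S m"
abbreviation weight :: "'p data \<Rightarrow> real" where "weight \<equiv> dalpha S m \<alpha>"
abbreviation mu :: "'p data \<Rightarrow> int \<Rightarrow> real" where "mu \<equiv> slope S m \<alpha>"

lemma rank_add: "rank (X + Y) = rank X + rank Y"
  by (simp add: dn_def sum.distrib plus_fun_apply)

lemma rank_zero: "rank 0 = 0"
  by (simp add: dn_def zero_fun_apply)

lemma rank_sum_list: "rank (sum_list Is) = sum_list (map rank Is)"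
  by (induction Is) (simp_all only: sum_list.Nil sum_list.Cons list.map rank_zero rank_add)

lemma rank_mono: "X \<le> Y \<Longrightarrow> rank X \<le> rank Y"
  unfolding dn_def le_fun_def by (intro sum_mono) auto

lemma weight_add: "weight (X + Y) = weight X + weight Y"
  by (simp add: dalpha_def sum.distrib algebra_simps plus_fun_apply)

lemma weight_zero: "weight 0 = 0"
  by (simp add: dalpha_def zero_fun_apply)

lemma weight_sum_list: "weight (sum_list Is) = sum_list (map weight Is)"
  by (induction Is) (simp_all only: sum_list.Nil sum_list.Cons list.map weight_zero weight_add)

lemma some_in_S: "(SOME P. P \<in> S) \<in> S"
  using S_nonempty by (meson ex_in_conv someI_ex)

lemma datum_rank_eq_sum: "datum X \<Longrightarrow> P \<in> S \<Longrightarrow> (\<Sum>i=1..m P. X P i) = rank X"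
  unfolding is_data_def dn_def using some_in_S by metis

lemma rank_pos: "datum X \<Longrightarrow> 0 < rank X"
  unfolding is_data_def dn_def using some_in_S by metis

lemma datum_le_rank: "datum X \<Longrightarrow> X P i \<le> rank X"
proof (cases "P \<in> S \<and> i \<in> {1..m P}")
  case True
  assume "datum X"
  then show ?thesis
    using True datum_rank_eq_sum[of X P] member_le_sum[of i "{1..m P}" "X P"] by simp
next
  case False
  assume "datum X"
  then have "X P i = 0" using False by (auto simp: is_data_def)
  then show ?thesis by simp
qed

lemma datum_add: "datum X \<Longrightarrow> datum Y \<Longrightarrow> datum (X + Y)"
  unfolding is_data_def by (auto simp: sum.distrib plus_fun_apply)

lemma datum_sum_list: "Is \<noteq> [] \<Longrightarrow> \<forall>X\<in>set Is. datum X \<Longrightarrow> datum (sum_list Is)"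
  by (induction Is rule: list_nonempty_induct) (auto intro: datum_add)

definition subdata :: "'p data \<Rightarrow> 'p data set" where
  "subdata R = {X. datum X \<and> X \<le> R}"

definition partitions :: "'p data \<Rightarrow> 'p data list set" where
  "partitions R = {Is. is_partition S m R Is}"

lemma partitions_iff: "Is \<in> partitions R \<longleftrightarrow> Is \<noteq> [] \<and> (\<forall>X\<in>set Is. datum X) \<and> R = sum_list Is"
  unfolding partitions_def is_partition_def fun_eq_iff sum_list_data_apply by simp

lemma finite_subdata: "finite (subdata R)"
proof -
  define mm where "mm = Max (m ` S)"
  define G where "G = {g. \<forall>i. (i \<in> {..mm} \<longrightarrow> g i \<in> {..rank R}) \<and> (i \<notin> {..mm} \<longrightarrow> g i = 0)}"
  have "finite G"
    unfolding G_def by (rule finite_set_of_finite_funs) auto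
  then have fin: "finite {X. \<forall>P. (P \<in> S \<longrightarrow> X P \<in> G) \<and> (P \<notin> S \<longrightarrow> X P = 0)}"
    using finite_S by (intro finite_set_of_finite_funs)
  have "X P \<in> G" if "X \<in> subdata R" "P \<in> S" for X P
  proof -
    have "m P \<le> mm" using finite_S \<open>P \<in> S\<close> by (simp add: mm_def)
    then have "X P i = 0" if "mm < i" for i
      using \<open>X \<in> subdata R\<close> that by (simp add: subdata_def is_data_def)
    moreover have "X P i \<le> rank R" for i
      using \<open>X \<in> subdata R\<close> datum_le_rank[of X P i] rank_mono[of X R] by (simp add: subdata_def)
    ultimately show ?thesis by (auto simp: G_def not_le)
  qed
  moreover have "X P = 0" if "X \<in> subdata R" "P \<notin> S" for X P
    using that by (auto simp: subdata_def is_data_def zero_fun_apply)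
  ultimately have "subdata R \<subseteq> {X. \<forall>P. (P \<in> S \<longrightarrow> X P \<in> G) \<and> (P \<notin> S \<longrightarrow> X P = 0)}"
    by blast
  then show ?thesis using fin finite_subset by blast
qed

lemma partition_part_subdata: "Is \<in> partitions R \<Longrightarrow> X \<in> set Is \<Longrightarrow> X \<in> subdata R"
  by (auto simp: partitions_iff subdata_def member_le_sum_list_data)

lemma length_partition_le_rank:
  assumes "Is \<in> partitions R"
  shows "length Is \<le> rank R"
proof -
  have "length Is \<le> sum_list (map rank Is)"
    using assms rank_pos sum_list_mono[of Is "\<lambda>_. 1" rank]
    by (auto simp: partitions_iff sum_list_triv Suc_le_eq)
  then show ?thesis using assms by (simp add: partitions_iff rank_sum_list)
qed

lemma finite_partitions: "finite (partitions R)"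
proof -
  have "partitions R \<subseteq> {xs. set xs \<subseteq> subdata R \<and> length xs \<le> rank R}"
    using partition_part_subdata length_partition_le_rank by blast
  then show ?thesis using finite_lists_length_le[OF finite_subdata] finite_subset by blast
qed

lemma self_subdata: "datum R \<Longrightarrow> R \<in> subdata R"
  by (simp add: subdata_def)

lemma subdata_add_left: "X \<in> subdata Y \<Longrightarrow> X \<in> subdata (Z + Y)"
  by (simp add: subdata_def le_fun_def plus_fun_apply) (meson trans_le_add2)

lemma subdata_trans: "X \<in> subdata Y \<Longrightarrow> Y \<in> subdata R \<Longrightarrow> X \<in> subdata R"
  unfolding subdata_def by auto

lemma prefix_data_subdata:
  assumes "Is \<in> partitions R" "1 \<le> k" "k \<le> length Is"
  shows "prefix_data Is k \<in> subdata R"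
proof -
  have "take k Is \<noteq> []" "\<forall>X\<in>set (take k Is). datum X"
    using assms by (auto simp: partitions_iff dest: in_set_takeD)
  moreover have "R = sum_list (take k Is) + sum_list (drop k Is)"
    using assms(1) by (simp add: partitions_iff flip: sum_list_append)
  then have "sum_list (take k Is) \<le> R"
    by (simp add: le_fun_def plus_fun_apply)
  ultimately show ?thesis
    using assms(3) datum_sum_list by (simp add: subdata_def prefix_data_eq_sum_take)
qed

definition sigma_pair :: "'p data \<Rightarrow> 'p data \<Rightarrow> int" where
  "sigma_pair X Y = (\<Sum>P\<in>S. \<Sum>i\<in>{1..m P}. \<Sum>t\<in>{1..<i}. int (Y P i) * int (X P t))"

lemma sigma_pair_add_left: "sigma_pair (X + Y) Z = sigma_pair X Z + sigma_pair Y Z"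
  by (simp add: sigma_pair_def sum.distrib algebra_simps plus_fun_apply)

lemma sigma_pair_add_right: "sigma_pair Z (X + Y) = sigma_pair Z X + sigma_pair Z Y"
  by (simp add: sigma_pair_def sum.distrib algebra_simps plus_fun_apply)

lemma sigma_pair_zero_left: "sigma_pair 0 Z = 0"
  by (simp add: sigma_pair_def zero_fun_apply)

lemma sigma_pair_zero_right: "sigma_pair Z 0 = 0"
  by (simp add: sigma_pair_def zero_fun_apply)

lemma sigma_pair_sum_list_right: "sigma_pair X (sum_list Is) = (\<Sum>k<length Is. sigma_pair X (Is ! k))"
proof (induction Is)
  case (Cons Y Is)
  have "sigma_pair X (sum_list (Y # Is)) = sigma_pair X Y + sigma_pair X (sum_list Is)"
    by (simp only: sum_list.Cons sigma_pair_add_right)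
  then show ?case
    unfolding Cons.IH by (simp add: sum.lessThan_Suc_shift del: sum.lessThan_Suc)
qed (simp add: sigma_pair_zero_right)

lemma sigma_eq_sum_sigma_pair: "sigma S m Is = (\<Sum>k<length Is. \<Sum>l<k. sigma_pair (Is ! l) (Is ! k))"
  unfolding sigma_def sigma_pair_def
  by (subst sum.swap, subst (2) sum.swap) (simp add: sum_distrib_left)

lemma sigma_Cons: "sigma S m (X # Is) = sigma S m Is + sigma_pair X (sum_list Is)"
  unfolding sigma_eq_sum_sigma_pair sigma_pair_sum_list_right
  by (simp add: sum.lessThan_Suc_shift sum.distrib del: sum.lessThan_Suc)

lemma sigma_single: "sigma S m [X] = 0"
  by (simp add: sigma_def)

lemma sigma_append:
  "sigma S m (I1 @ I2) = sigma S m I1 + sigma S m I2 + sigma_pair (sum_list I1) (sum_list I2)"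
proof (induction I1)
  case Nil
  then show ?case
    by (simp add: sigma_def sigma_pair_zero_left)
next
  case (Cons X I1)
  then show ?case
    by (simp add: sigma_Cons sigma_pair_add_left sigma_pair_add_right)
qed

definition cross_exp :: "'p data \<Rightarrow> int \<Rightarrow> 'p data \<Rightarrow> int \<Rightarrow> int" where
  "cross_exp X e Y f = e * int (rank Y) - f * int (rank X) - sigma_pair X Y"

lemma Nexp_Cons:
  assumes "length ds = length Is"
  shows "Nexp S m (X # Is) (e # ds) = Nexp S m Is ds + cross_exp X e (sum_list Is) (sum_list ds)"
proof -
  define g where "g = (\<lambda>k l. (e # ds) ! l * int (rank ((X # Is) ! k)) - (e # ds) ! k * int (rank ((X # Is) ! l)))"
  have "(\<Sum>k<Suc (length Is). \<Sum>l<k. g k l)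
      = (\<Sum>k<length Is. g (Suc k) 0) + (\<Sum>k<length Is. \<Sum>l<k. g (Suc k) (Suc l))"
    by (simp add: sum.lessThan_Suc_shift sum.distrib del: sum.lessThan_Suc)
  also have "(\<Sum>k<length Is. g (Suc k) 0)
      = e * (\<Sum>k<length Is. int (rank (Is ! k))) - (\<Sum>k<length ds. ds ! k) * int (rank X)"
    using assms by (simp add: g_def sum_subtractf sum_distrib_left sum_distrib_right)
  also have "\<dots> = e * int (rank (sum_list Is)) - sum_list ds * int (rank X)"
    by (simp add: rank_sum_list sum_list_map_conv_sum_nth sum_list_sum_nth[of ds] atLeast0LessThan)
  finally show ?thesis
    by (simp add: Nexp_def sigma_Cons cross_exp_def g_def)
qed

lemma qterm_Cons:
  assumes "length ds = length Is"
  shows "qterm S m Qd (X # Is) (e # ds) =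
           fls_X_intpow (cross_exp X e (sum_list Is) (sum_list ds)) * Qd X e * qterm S m Qd Is ds"
proof -
  have "qterm S m Qd (X # Is) (e # ds) =
      fls_X_intpow (Nexp S m Is ds + cross_exp X e (sum_list Is) (sum_list ds))
        * (Qd X e * (\<Prod>k<length Is. Qd (Is ! k) (ds ! k)))"
    unfolding qterm_def Nexp_Cons[OF assms]
    by (simp add: prod.lessThan_Suc_shift del: prod.lessThan_Suc)
  then show ?thesis
    unfolding qterm_def by (simp only: fls_X_intpow_times_fls_X_intpow[symmetric] ac_simps)
qed

lemma qterm_single: "qterm S m Qd [X] [e] = Qd X e"
  by (simp add: qterm_def Nexp_def sigma_single)

section \<open>Slopes and the truncated sums\<close>

lemma rank_mult_slope: "datum X \<Longrightarrow> real (rank X) * mu X e = real_of_int e + weight X"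
  using rank_pos[of X] by (simp add: slope_def)

lemma slope_le_iff: "datum X \<Longrightarrow> mu X e \<le> lam \<longleftrightarrow> real_of_int e + weight X \<le> real (rank X) * lam"
  using rank_pos[of X] by (simp add: slope_def pos_divide_le_eq mult.commute)

lemma slope_less_iff: "datum X \<Longrightarrow> mu X e < lam \<longleftrightarrow> real_of_int e + weight X < real (rank X) * lam"
  using rank_pos[of X] by (simp add: slope_def pos_divide_less_eq mult.commute)

lemma less_slope_iff: "datum X \<Longrightarrow> lam < mu X e \<longleftrightarrow> real (rank X) * lam < real_of_int e + weight X"
  using rank_pos[of X] by (simp add: slope_def pos_less_divide_eq mult.commute)

lemma Dset_iff:
  "(Is, ds) \<in> Dset S m \<alpha> R d \<longleftrightarrow> Is \<in> partitions R \<and> length ds = length Is \<and> sum_list ds = d \<and>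
     (\<forall>k. Suc k < length Is \<longrightarrow> mu (Is ! Suc k) (ds ! Suc k) < mu (Is ! k) (ds ! k))"
  by (simp add: Dset_def partitions_def)

lemma Dset_nonempty: "(Is, ds) \<in> Dset S m \<alpha> R d \<Longrightarrow> Is \<noteq> [] \<and> ds \<noteq> [] \<and> length ds = length Is"
  by (auto simp: Dset_iff partitions_iff)

lemma Dset_single: "([X], [e]) \<in> Dset S m \<alpha> R d \<longleftrightarrow> datum X \<and> R = X \<and> d = e"
  by (auto simp: Dset_iff partitions_iff)

lemma Dset_Cons:
  assumes "Is \<noteq> []"
  shows "(X # Is, e # ds) \<in> Dset S m \<alpha> R d \<longleftrightarrow>
     datum X \<and> (Is, ds) \<in> Dset S m \<alpha> (sum_list Is) (sum_list ds) \<and> R = X + sum_list Is \<and>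
     d = e + sum_list ds \<and> mu (hd Is) (hd ds) < mu X e"
proof -
  obtain n where n: "length Is = Suc n"
    using assms by (cases Is) auto
  have chain_Cons: "(\<forall>k. Suc k < length (X # Is) \<longrightarrow> B k) \<longleftrightarrow>
      B 0 \<and> (\<forall>k. Suc k < length Is \<longrightarrow> B (Suc k))" for B
    using All_less_Suc2[of n B] by (simp add: n)
  have "length ds = length Is \<Longrightarrow> hd Is = Is ! 0 \<and> hd ds = ds ! 0"
    using assms by (metis hd_conv_nth length_0_conv)
  then show ?thesis
    using assms unfolding Dset_iff partitions_iff chain_Cons by auto
qed

lemma Dset_slope_le_hd:
  assumes "(Is, ds) \<in> Dset S m \<alpha> R d" "k < length Is"
  shows "mu (Is ! k) (ds ! k) \<le> mu (hd Is) (hd ds)"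
proof -
  have "mu (Is ! k) (ds ! k) \<le> mu (Is ! 0) (ds ! 0)"
    using assms(2)
  proof (induction k)
    case (Suc k)
    then show ?case
      using assms(1) by (simp add: Dset_iff) (meson Suc_lessD less_imp_le order_trans)
  qed simp
  then show ?thesis
    using Dset_nonempty[OF assms(1)] by (simp add: hd_conv_nth)
qed

lemma Dset_hd_subdata: "(Is, ds) \<in> Dset S m \<alpha> R d \<Longrightarrow> hd Is \<in> subdata R"
  using Dset_nonempty partition_part_subdata by (metis Dset_iff hd_in_set)

(* The slope of R is the rank-weighted average of the slopes of the parts. *)

lemma slope_lt_hd_slope:
  assumes D: "(Is, ds) \<in> Dset S m \<alpha> R d" and len: "2 \<le> length Is"
  shows "mu R d < mu (hd Is) (hd ds)"
proof -
  define r where "r = length Is"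
  define s where "s = (\<lambda>k. mu (Is ! k) (ds ! k))"
  define w where "w = (\<lambda>k. real (rank (Is ! k)))"
  have P: "Is \<in> partitions R" and lds: "length ds = r" and sds: "sum_list ds = d"
    using D by (auto simp: Dset_iff r_def)
  then have R: "R = sum_list Is" and parts: "\<And>k. k < r \<Longrightarrow> datum (Is ! k)"
    by (auto simp: partitions_iff r_def)
  have datR: "datum R"
    using P datum_sum_list by (auto simp: partitions_iff)
  have "real (rank R) * mu R d = real_of_int d + weight R"
    using datR by (rule rank_mult_slope)
  also have "\<dots> = (\<Sum>k<r. real_of_int (ds ! k) + weight (Is ! k))"
    using sds lds unfolding R weight_sum_list
    by (simp add: sum.distrib sum_list_map_conv_sum_nth sum_list_sum_nth atLeast0LessThan r_def
             flip: of_int_sum)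
  also have "\<dots> = (\<Sum>k<r. w k * s k)"
    using parts rank_mult_slope by (simp add: w_def s_def)
  also have "\<dots> < (\<Sum>k<r. w k * s 0)"
  proof (rule sum_strict_mono_ex1)
    have "s k \<le> s 0" if "k < r" for k
      using Dset_slope_le_hd[OF D, of k] Dset_nonempty[OF D] that
      by (simp add: s_def r_def hd_conv_nth)
    then show "\<forall>k\<in>{..<r}. w k * s k \<le> w k * s 0"
      by (simp add: w_def mult_left_mono)
    have "s 1 < s 0" "0 < w 1"
      using D len parts[of 1] rank_pos by (auto simp: Dset_iff s_def w_def r_def)
    then show "\<exists>k\<in>{..<r}. w k * s k < w k * s 0"
      using len by (intro bexI[of _ 1]) (auto simp: r_def)
  qed simp
  also have "\<dots> = real (rank R) * s 0"
    by (simp add: R rank_sum_list sum_list_map_conv_sum_nth w_def r_def of_nat_sum sum_distrib_right)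
  finally have "mu R d < s 0"
    using rank_pos[OF datR] by (simp add: mult_less_cancel_left_pos)
  then show ?thesis
    using Dset_nonempty[OF D] by (simp add: s_def hd_conv_nth)
qed

definition Dset_upto :: "'p data \<Rightarrow> int \<Rightarrow> real \<Rightarrow> ('p data list \<times> int list) set" where
  "Dset_upto R d lam = {(Is, ds) \<in> Dset S m \<alpha> R d. mu (hd Is) (hd ds) \<le> lam}"

definition Qlam :: "('p data \<Rightarrow> int \<Rightarrow> rat fls) \<Rightarrow> 'p data \<Rightarrow> int \<Rightarrow> real \<Rightarrow> rat fls" where
  "Qlam Qd R d lam = (\<Sum>(Is, ds)\<in>Dset_upto R d lam. qterm S m Qd Is ds)"

lemma Dset_upto_degree_le:
  assumes D: "(Is, ds) \<in> Dset_upto R d lam" and k: "k < length Is"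
  shows "ds ! k \<le> \<lfloor>real (rank R) * \<bar>lam\<bar> + (\<Sum>X\<in>subdata R. \<bar>weight X\<bar>)\<rfloor>"
proof -
  define X where "X = Is ! k"
  have D': "(Is, ds) \<in> Dset S m \<alpha> R d" and hd_le: "mu (hd Is) (hd ds) \<le> lam"
    using D by (auto simp: Dset_upto_def)
  then have X: "X \<in> subdata R"
    using k partition_part_subdata by (auto simp: Dset_iff X_def)
  then have datX: "datum X" and "rank X \<le> rank R"
    using rank_mono by (auto simp: subdata_def)
  have "mu X (ds ! k) \<le> lam"
    using Dset_slope_le_hd[OF D' k] hd_le by (simp add: X_def)
  then have "real_of_int (ds ! k) + weight X \<le> real (rank X) * lam"
    using slope_le_iff[OF datX] by simp
  also have "\<dots> \<le> real (rank R) * \<bar>lam\<bar>"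
    using \<open>rank X \<le> rank R\<close> by (intro order.trans[OF mult_left_mono mult_right_mono]) auto
  finally have "real_of_int (ds ! k) \<le> real (rank R) * \<bar>lam\<bar> + \<bar>weight X\<bar>"
    by linarith
  also have "\<bar>weight X\<bar> \<le> (\<Sum>X\<in>subdata R. \<bar>weight X\<bar>)"
    using X finite_subdata by (intro member_le_sum) auto
  finally show ?thesis
    by (simp add: le_floor_iff)
qed

lemma finite_Dset_upto: "finite (Dset_upto R d lam)"
proof -
  define B where "B = \<lfloor>real (rank R) * \<bar>lam\<bar> + (\<Sum>X\<in>subdata R. \<bar>weight X\<bar>)\<rfloor>"
  have "0 \<le> B"
    unfolding B_def by (simp add: sum_nonneg)
  have bounds: "Is \<in> partitions R \<and> set ds \<subseteq> {d - int (rank R) * B..B} \<and> length ds \<le> rank R"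
    if D: "(Is, ds) \<in> Dset_upto R d lam" for Is ds
  proof -
    have P: "Is \<in> partitions R" and len: "length ds = length Is" and "sum_list ds = d"
      using D by (auto simp: Dset_upto_def Dset_iff)
    have le_B: "\<forall>x\<in>set ds. x \<le> B"
      using Dset_upto_degree_le[OF D] len by (auto simp: B_def in_set_conv_nth)
    have len_le: "length ds \<le> rank R"
      using length_partition_le_rank[OF P] len by simp
    have "d - int (rank R) * B \<le> x" if "x \<in> set ds" for x
      using sum_list_ge_length_times[OF le_B \<open>0 \<le> B\<close> that] \<open>sum_list ds = d\<close>
        mult_right_mono[OF _ \<open>0 \<le> B\<close>, of "int (length ds)" "int (rank R)"] len_le
      by linarith
    then show ?thesis
      using P le_B len_le by auto
  qed
  have "Dset_upto R d lam \<subseteq>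
      partitions R \<times> {ds. set ds \<subseteq> {d - int (rank R) * B..B} \<and> length ds \<le> rank R}"
    using bounds by auto
  moreover have "finite (partitions R \<times> {ds. set ds \<subseteq> {d - int (rank R) * B..B} \<and> length ds \<le> rank R})"
    by (intro finite_cartesian_product finite_partitions finite_lists_length_le) simp
  ultimately show ?thesis
    using finite_subset by blast
qed

lemma Dset_upto_at_slope: "datum R \<Longrightarrow> Dset_upto R d (mu R d) = {([R], [d])}"
proof safe
  fix Is ds assume D: "(Is, ds) \<in> Dset_upto R d (mu R d)"
  then have D': "(Is, ds) \<in> Dset S m \<alpha> R d"
    by (simp add: Dset_upto_def)
  have "\<not> 2 \<le> length Is"
    using slope_lt_hd_slope[OF D'] D by (auto simp: Dset_upto_def)
  then have "length Is = 1"
    using Dset_nonempty[OF D'] by (cases Is) (auto simp: Suc_le_eq)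
  moreover have "length ds = length Is"
    using Dset_nonempty[OF D'] by simp
  ultimately obtain X e where "Is = [X]" "ds = [e]"
    by (metis One_nat_def length_0_conv length_Suc_conv)
  then show "Is = [R]" "ds = [d]"
    using D' by (auto simp: Dset_single)
qed (auto simp: Dset_upto_def Dset_single)

lemma Qlam_at_slope: "datum R \<Longrightarrow> Qlam Qd R d (mu R d) = Qd R d"
  by (simp add: Qlam_def Dset_upto_at_slope qterm_single)

definition walls :: "'p data \<Rightarrow> real set" where
  "walls R = {mu X e | X e. X \<in> subdata R}"

lemma finite_walls_Int: "finite (walls R \<inter> {a<..b})"
proof -
  let ?E = "\<lambda>X. {\<lceil>real (rank X) * a - weight X\<rceil>..\<lfloor>real (rank X) * b - weight X\<rfloor>}"
  have "e \<in> ?E X" if "datum X" "a < mu X e" "mu X e \<le> b" for X e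
    using that less_slope_iff slope_le_iff by (auto simp: ceiling_le_iff le_floor_iff)
  then have "walls R \<inter> {a<..b} \<subseteq> (\<Union>X\<in>subdata R. mu X ` ?E X)"
    by (fastforce simp: walls_def subdata_def)
  then show ?thesis
    using finite_subdata finite_subset by blast
qed

lemma Qlam_const:
  assumes "walls R \<inter> {a<..b} = {}" "a \<le> b"
  shows "Qlam Qd R d b = Qlam Qd R d a"
proof -
  have "mu (hd Is) (hd ds) \<le> b \<longleftrightarrow> mu (hd Is) (hd ds) \<le> a" if "(Is, ds) \<in> Dset S m \<alpha> R d" for Is ds
  proof -
    have "mu (hd Is) (hd ds) \<in> walls R"
      using Dset_hd_subdata[OF that] by (auto simp: walls_def)
    then show ?thesis
      using assms by auto
  qed
  then have "Dset_upto R d b = Dset_upto R d a"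
    unfolding Dset_upto_def by blast
  then show ?thesis
    by (simp add: Qlam_def)
qed

section \<open>Wall-crossing for the truncated sums\<close>

definition floor_at :: "real \<Rightarrow> 'p data \<Rightarrow> int" where
  "floor_at lam X = \<lfloor>real (rank X) * lam - weight X\<rfloor>"

(* The value of floor_at (lam - t) X for all sufficiently small t > 0. *)

definition floor_left :: "real \<Rightarrow> 'p data \<Rightarrow> int" where
  "floor_left lam X = \<lceil>real (rank X) * lam - weight X\<rceil> - 1"

definition left_stable :: "'p data \<Rightarrow> real \<Rightarrow> real \<Rightarrow> bool" where
  "left_stable R lam \<delta> \<longleftrightarrow>
     0 < \<delta> \<and> (\<forall>X\<in>subdata R. \<forall>t. 0 < t \<and> t \<le> \<delta> \<longrightarrow> floor_at (lam - t) X = floor_left lam X)"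

lemma ex_left_stable: "\<exists>\<delta>. left_stable R lam \<delta>"
proof -
  define y where "y = (\<lambda>X. real (rank X) * lam - weight X)"
  define gap where "gap = (\<lambda>X. (y X - of_int (\<lceil>y X\<rceil> - 1)) / real (rank X))"
  define \<delta> where "\<delta> = Min (insert 1 (gap ` subdata R))"
  have fin: "finite (insert 1 (gap ` subdata R))"
    using finite_subdata by simp
  have gap_pos: "0 < gap X" if "X \<in> subdata R" for X
    using that rank_pos ceiling_correct[of "y X"] by (simp add: gap_def subdata_def)
  have "0 < \<delta>"
    unfolding \<delta>_def using fin gap_pos by (auto simp: Min_gr_iff)
  moreover have "floor_at (lam - t) X = floor_left lam X"
    if X: "X \<in> subdata R" and t: "0 < t" "t \<le> \<delta>" for X t
  proof -
    have n: "0 < real (rank X)"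
      using X rank_pos by (simp add: subdata_def)
    have "t \<le> gap X"
      using t X fin unfolding \<delta>_def by (meson Min_le image_eqI insertCI order_trans)
    then have "real (rank X) * t \<le> y X - of_int (\<lceil>y X\<rceil> - 1)"
      using n by (simp add: gap_def pos_le_divide_eq mult.commute)
    moreover have "0 < real (rank X) * t" "y X \<le> of_int \<lceil>y X\<rceil>"
      using n t by (simp_all add: le_of_int_ceiling)
    ultimately have "\<lfloor>y X - real (rank X) * t\<rfloor> = \<lceil>y X\<rceil> - 1"
      by (intro floor_unique) linarith+
    then show ?thesis
      by (simp add: floor_at_def floor_left_def y_def algebra_simps)
  qed
  ultimately show ?thesis
    unfolding left_stable_def by blast
qed

lemma slope_le_left:
  assumes "left_stable R lam \<delta>" "X \<in> subdata R" "mu X e < lam" "0 < t" "t \<le> \<delta>"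
  shows "mu X e \<le> lam - t"
proof -
  have datX: "datum X"
    using assms(2) by (simp add: subdata_def)
  then have "real_of_int e + weight X < real (rank X) * lam"
    using assms(3) slope_less_iff[OF datX] by simp
  then have "e \<le> floor_left lam X"
    by (simp add: floor_left_def less_ceiling_iff)
  also have "\<dots> = floor_at (lam - t) X"
    using assms unfolding left_stable_def by auto
  finally show ?thesis
    using slope_le_iff[OF datX] by (simp add: floor_at_def le_floor_iff)
qed

lemma floor_at_const:
  assumes X: "X \<in> subdata R" and "a \<le> b" and no_wall: "walls R \<inter> {a<..b} = {}"
  shows "floor_at b X = floor_at a X"
proof (rule ccontr)
  assume "floor_at b X \<noteq> floor_at a X"
  have datX: "datum X"
    using X by (simp add: subdata_def)
  have "floor_at a X \<le> floor_at b X"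
    unfolding floor_at_def using \<open>a \<le> b\<close> by (intro floor_mono diff_right_mono mult_left_mono) auto
  then have "floor_at a X < floor_at b X"
    using \<open>floor_at b X \<noteq> floor_at a X\<close> by simp
  then have "a < mu X (floor_at b X)" "mu X (floor_at b X) \<le> b"
    using less_slope_iff[OF datX] slope_le_iff[OF datX] unfolding floor_at_def
    by (simp_all add: floor_less_iff) linarith
  moreover have "mu X (floor_at b X) \<in> walls R"
    using X by (auto simp: walls_def)
  ultimately show False
    using no_wall by auto
qed

definition splits_at :: "'p data \<Rightarrow> real \<Rightarrow> ('p data \<times> int) set" where
  "splits_at R lam = {(X, e). X \<in> subdata R \<and> datum (R - X) \<and> mu X e = lam}"

lemma splits_at_degree:
  assumes "(X, e) \<in> splits_at R lam"
  shows "real_of_int e = real (rank X) * lam - weight X"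
  using assms rank_mult_slope[of X e] by (auto simp: splits_at_def subdata_def)

lemma splits_at_floor: "(X, e) \<in> splits_at R lam \<Longrightarrow> e = floor_at lam X"
  using splits_at_degree by (simp add: floor_at_def) (metis floor_of_int)

lemma finite_splits_at: "finite (splits_at R lam)"
proof -
  have "splits_at R lam \<subseteq> (\<lambda>X. (X, floor_at lam X)) ` subdata R"
    using splits_at_floor by (auto simp: splits_at_def)
  then show ?thesis
    using finite_subdata finite_subset by blast
qed

lemma splits_at_add_diff: "(X, e) \<in> splits_at R lam \<Longrightarrow> X + (R - X) = R"
  by (auto simp: splits_at_def subdata_def intro: data_add_diff_inverse)

lemma splits_at_slope_rest_less:
  assumes XS: "(X, e) \<in> splits_at R lam" and datR: "datum R" and lt: "mu R d < lam"
  shows "mu (R - X) (d - e) < lam"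
proof -
  have datX: "datum X" and datY: "datum (R - X)" and muX: "mu X e = lam"
    using XS by (auto simp: splits_at_def subdata_def)
  have R: "R = X + (R - X)"
    using splits_at_add_diff[OF XS] by simp
  have "real (rank R) * mu R d = real (rank X) * lam + (real_of_int (d - e) + weight (R - X))"
    using rank_mult_slope[OF datR, of d] rank_mult_slope[OF datX, of e] muX
    by (subst (asm) (2) R) (simp add: weight_add)
  moreover have "real (rank R) * mu R d < real (rank R) * lam"
    using lt rank_pos[OF datR] by simp
  ultimately have "real_of_int (d - e) + weight (R - X) < real (rank (R - X)) * lam"
    by (subst (asm) (2 3) R) (simp add: rank_add algebra_simps)
  then show ?thesis
    using slope_less_iff[OF datY] by simp
qed

lemma Dset_upto_jump:
  assumes stable: "left_stable R lam \<delta>" and t: "0 < t" "t \<le> \<delta>"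
    and datR: "datum R" and lt: "mu R d < lam"
  shows "Dset_upto R d lam - Dset_upto R d (lam - t) =
    (\<lambda>((X, e), (Is, ds)). (X # Is, e # ds)) `
      Sigma (splits_at R lam) (\<lambda>(X, e). Dset_upto (R - X) (d - e) (lam - t))"
  (is "?L = ?f ` ?G")
proof (intro equalityI subsetI)
  fix p assume "p \<in> ?L"
  then obtain Is ds where p: "p = (Is, ds)" and D: "(Is, ds) \<in> Dset S m \<alpha> R d"
    and le: "mu (hd Is) (hd ds) \<le> lam" and nle: "\<not> mu (hd Is) (hd ds) \<le> lam - t"
    by (cases p) (auto simp: Dset_upto_def)
  have hd_sub: "hd Is \<in> subdata R"
    using Dset_hd_subdata[OF D] .
  have hd_slope: "mu (hd Is) (hd ds) = lam"
    using slope_le_left[OF stable hd_sub _ t] le nle by force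
  obtain X I e es where Is: "Is = X # I" and ds: "ds = e # es"
    using Dset_nonempty[OF D] by (meson list.exhaust)
  have "I \<noteq> []"
  proof
    assume "I = []"
    then have "R = X" "d = e"
      using D Dset_nonempty[OF D] by (auto simp: Is ds Dset_single)
    then show False
      using hd_slope lt by (simp add: Is ds)
  qed
  then have X: "datum X" and D': "(I, es) \<in> Dset S m \<alpha> (sum_list I) (sum_list es)"
    and R: "R = X + sum_list I" and d: "d = e + sum_list es" and less: "mu (hd I) (hd es) < mu X e"
    using D by (auto simp: Is ds Dset_Cons)
  have rest: "R - X = sum_list I" "d - e = sum_list es"
    using R d by simp_all
  have "(X, e) \<in> splits_at R lam"
    using hd_sub hd_slope D' rest by (auto simp: splits_at_def Is ds Dset_iff partitions_iff
        intro: datum_sum_list)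
  moreover have "hd I \<in> subdata R"
    using Dset_hd_subdata[OF D'] R subdata_add_left by simp
  then have "(I, es) \<in> Dset_upto (R - X) (d - e) (lam - t)"
    using slope_le_left[OF stable _ _ t] less hd_slope D' rest by (simp add: Dset_upto_def Is ds)
  ultimately show "p \<in> ?f ` ?G"
    using p Is ds by force
next
  fix p assume "p \<in> ?f ` ?G"
  then obtain X e I es where p: "p = (X # I, e # es)" and XS: "(X, e) \<in> splits_at R lam"
    and D': "(I, es) \<in> Dset S m \<alpha> (R - X) (d - e)" and le: "mu (hd I) (hd es) \<le> lam - t"
    by (auto simp: Dset_upto_def)
  have "I \<noteq> []" "sum_list I = R - X" "sum_list es = d - e"
    using D' by (auto simp: Dset_iff partitions_iff)
  moreover have "datum X" "mu X e = lam"
    using XS by (auto simp: splits_at_def subdata_def)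
  ultimately have "(X # I, e # es) \<in> Dset S m \<alpha> R d"
    using D' le t splits_at_add_diff[OF XS] by (simp add: Dset_Cons)
  then show "p \<in> ?L"
    using p t \<open>mu X e = lam\<close> by (simp add: Dset_upto_def)
qed

lemma Qlam_jump:
  assumes "left_stable R lam \<delta>" "0 < t" "t \<le> \<delta>" "datum R" "mu R d < lam"
  shows "Qlam Qd R d lam - Qlam Qd R d (lam - t) =
    (\<Sum>(X, e)\<in>splits_at R lam. fls_X_intpow (cross_exp X e (R - X) (d - e)) * Qd X e *
        Qlam Qd (R - X) (d - e) (lam - t))"
proof -
  let ?q = "\<lambda>(Is, ds). qterm S m Qd Is ds"
  let ?f = "\<lambda>((X, e), (Is, ds)). (X # Is, e # ds)"
  let ?G = "Sigma (splits_at R lam) (\<lambda>(X, e). Dset_upto (R - X) (d - e) (lam - t))"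
  have "Dset_upto R d (lam - t) \<subseteq> Dset_upto R d lam"
    using assms(2) by (auto simp: Dset_upto_def)
  then have "Qlam Qd R d lam - Qlam Qd R d (lam - t) = sum ?q (?f ` ?G)"
    unfolding Qlam_def Dset_upto_jump[OF assms, symmetric]
    by (simp add: sum_diff finite_Dset_upto)
  also have "\<dots> = sum (?q \<circ> ?f) ?G"
    by (rule sum.reindex) (auto simp: inj_on_def)
  also have "\<dots> = (\<Sum>p\<in>splits_at R lam. \<Sum>q\<in>(case p of (X, e) \<Rightarrow> Dset_upto (R - X) (d - e) (lam - t)).
      (?q \<circ> ?f) (p, q))"
    by (rule sum_Sigma_eq) (auto simp: finite_splits_at finite_Dset_upto)
  also have "\<dots> = (\<Sum>(X, e)\<in>splits_at R lam. fls_X_intpow (cross_exp X e (R - X) (d - e)) * Qd X e *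
      Qlam Qd (R - X) (d - e) (lam - t))"
    unfolding Qlam_def sum_distrib_left
  proof (intro sum.cong refl, clarsimp, intro sum.cong refl, clarsimp)
    fix X e Is ds assume "(Is, ds) \<in> Dset_upto (R - X) (d - e) (lam - t)"
    then have "length ds = length Is" "sum_list Is = R - X" "sum_list ds = d - e"
      by (auto simp: Dset_upto_def Dset_iff partitions_iff)
    then show "qterm S m Qd (X # Is) (e # ds) =
        fls_X_intpow (cross_exp X e (R - X) (d - e)) * Qd X e * qterm S m Qd Is ds"
      using qterm_Cons[of ds Is] by simp
  qed
  finally show ?thesis .
qed

section \<open>Wall-crossing for the closed formula\<close>

definition adj_rank :: "'p data list \<Rightarrow> nat \<Rightarrow> nat" where
  "adj_rank Is k = rank (Is ! (k - 1)) + rank (Is ! k)"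

definition denoms :: "'p data list \<Rightarrow> nat set \<Rightarrow> rat fls" where
  "denoms Is K = (\<Prod>k\<in>K. inverse (fls_X ^ adj_rank Is k - 1))"

definition Mexp_with :: "(nat \<Rightarrow> 'p data \<Rightarrow> int) \<Rightarrow> 'p data list \<Rightarrow> int" where
  "Mexp_with fl Is = (\<Sum>k\<in>{1..<length Is}. int (adj_rank Is k) * fl k (prefix_data Is k))"

definition Sterm :: "('p data \<Rightarrow> rat fls) \<Rightarrow> 'p data \<Rightarrow> int \<Rightarrow> (nat \<Rightarrow> 'p data \<Rightarrow> int) \<Rightarrow>
    nat set \<Rightarrow> 'p data list \<Rightarrow> rat fls" where
  "Sterm Q R d fl K Is = fls_X_intpow (M'exp S m R Is d + Mexp_with fl Is) * denoms Is K *
     prod_list (map Q Is)"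

abbreviation all_denoms :: "'p data list \<Rightarrow> nat set" where
  "all_denoms Is \<equiv> {1..<length Is}"

definition Slam_left :: "('p data \<Rightarrow> rat fls) \<Rightarrow> 'p data \<Rightarrow> int \<Rightarrow> real \<Rightarrow> rat fls" where
  "Slam_left Q R d lam = (\<Sum>Is\<in>partitions R. Sterm Q R d (\<lambda>_. floor_left lam) (all_denoms Is) Is)"

lemma Slam_eq: "Slam S m \<alpha> Q R d lam = (\<Sum>Is\<in>partitions R. Sterm Q R d (\<lambda>_. floor_at lam) (all_denoms Is) Is)"
  by (simp add: Slam_def Sterm_def partitions_def denoms_def adj_rank_def Mexp_with_def Mexp_def
      floor_at_def prod_list_map_conv_prod_nth)

definition on_wall :: "real \<Rightarrow> 'p data \<Rightarrow> bool" where
  "on_wall lam X \<longleftrightarrow> real (rank X) * lam - weight X \<in> \<int>"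

lemma floor_at_minus_floor_left: "floor_at lam X - floor_left lam X = (if on_wall lam X then 1 else 0)"
  by (simp add: floor_at_def floor_left_def on_wall_def ceiling_altdef frac_eq_0_iff[symmetric] frac_def)

lemma adj_rank_pos: "\<forall>X\<in>set Is. datum X \<Longrightarrow> k < length Is \<Longrightarrow> 0 < adj_rank Is k"
  using rank_pos by (simp add: adj_rank_def)

lemma denoms_remove:
  assumes "\<forall>X\<in>set Is. datum X" "c \<in> {1..<length Is}"
  shows "(fls_X_intpow (int (adj_rank Is c)) - 1) * denoms Is (all_denoms Is) =
    denoms Is (all_denoms Is - {c})"
proof -
  have "(fls_X ^ adj_rank Is c - 1 :: rat fls) \<noteq> 0"
    using fls_X_power_minus_1_neq_0 adj_rank_pos[OF assms(1), of c] assms(2) by auto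
  then show ?thesis
    using assms(2) by (simp add: denoms_def prod.remove fls_X_power_conv_intpow[symmetric])
qed

definition floor_cut :: "real \<Rightarrow> nat \<Rightarrow> nat \<Rightarrow> 'p data \<Rightarrow> int" where
  "floor_cut lam c k = (if k < c then floor_at lam else floor_left lam)"

lemma Mexp_with_floor_cut_Suc:
  assumes "c \<in> {1..<length Is}"
  shows "Mexp_with (floor_cut lam (Suc c)) Is =
    Mexp_with (floor_cut lam c) Is + (if on_wall lam (prefix_data Is c) then int (adj_rank Is c) else 0)"
proof -
  have "Mexp_with (floor_cut lam (Suc c)) Is - Mexp_with (floor_cut lam c) Is =
      (\<Sum>k\<in>{1..<length Is}. if k = c then int (adj_rank Is k) *
        (floor_at lam (prefix_data Is k) - floor_left lam (prefix_data Is k)) else 0)"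
    unfolding Mexp_with_def sum_subtractf[symmetric]
    by (rule sum.cong) (auto simp: floor_cut_def algebra_simps)
  then show ?thesis
    using assms by (cases "on_wall lam (prefix_data Is c)") (simp_all add: floor_at_minus_floor_left)
qed

(* Telescoping over the cut c below which the floors are taken at lam rather than left of it:
   moving the cut past k multiplies by x^(adj_rank Is k) exactly when the k-th prefix is on a wall. *)
lemma Sterm_minus_Sterm_left:
  assumes "\<forall>X\<in>set Is. datum X" "Is \<noteq> []"
  shows "Sterm Q R d (\<lambda>_. floor_at lam) (all_denoms Is) Is - Sterm Q R d (\<lambda>_. floor_left lam) (all_denoms Is) Is =
    (\<Sum>c\<in>{c\<in>{1..<length Is}. on_wall lam (prefix_data Is c)}.
       Sterm Q R d (floor_cut lam c) (all_denoms Is - {c}) Is)"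
proof -
  define E where "E = (\<lambda>c. fls_X_intpow (M'exp S m R Is d + Mexp_with (floor_cut lam c) Is) :: rat fls)"
  define D where "D = denoms Is (all_denoms Is) * prod_list (map Q Is)"
  have E1: "Mexp_with (floor_cut lam 1) Is = Mexp_with (\<lambda>_. floor_left lam) Is"
    and Er: "Mexp_with (floor_cut lam (length Is)) Is = Mexp_with (\<lambda>_. floor_at lam) Is"
    unfolding Mexp_with_def by (auto simp: floor_cut_def intro!: sum.cong)
  have step: "(E (Suc c) - E c) * D =
      (if on_wall lam (prefix_data Is c) then Sterm Q R d (floor_cut lam c) (all_denoms Is - {c}) Is else 0)"
    if c: "c \<in> {1..<length Is}" for c
  proof (cases "on_wall lam (prefix_data Is c)")
    case True
    then have "M'exp S m R Is d + Mexp_with (floor_cut lam (Suc c)) Is =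
        (M'exp S m R Is d + Mexp_with (floor_cut lam c) Is) + int (adj_rank Is c)"
      using Mexp_with_floor_cut_Suc[OF c] by simp
    then have "E (Suc c) = E c * fls_X_intpow (int (adj_rank Is c))"
      unfolding E_def by (metis fls_X_intpow_times_fls_X_intpow)
    then have "(E (Suc c) - E c) * D = E c * ((fls_X_intpow (int (adj_rank Is c)) - 1) *
        denoms Is (all_denoms Is)) * prod_list (map Q Is)"
      by (simp add: D_def algebra_simps)
    then show ?thesis
      using True unfolding denoms_remove[OF assms(1) c] by (simp add: Sterm_def E_def)
  qed (simp add: E_def Mexp_with_floor_cut_Suc[OF c])
  have "Sterm Q R d (\<lambda>_. floor_at lam) (all_denoms Is) Is - Sterm Q R d (\<lambda>_. floor_left lam) (all_denoms Is) Is
      = (E (length Is) - E 1) * D"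
    unfolding Sterm_def E_def D_def E1 Er by (simp add: algebra_simps)
  also have "\<dots> = (\<Sum>c\<in>{1..<length Is}. (E (Suc c) - E c) * D)"
    unfolding sum_distrib_right[symmetric]
    using sum_Suc_diff'[of 1 "length Is" E] assms(2) by (simp add: Suc_le_eq)
  also have "\<dots> = (\<Sum>c\<in>{c\<in>{1..<length Is}. on_wall lam (prefix_data Is c)}.
       Sterm Q R d (floor_cut lam c) (all_denoms Is - {c}) Is)"
    unfolding sum.inter_filter[OF finite_atLeastLessThan] by (rule sum.cong) (simp_all add: step)
  finally show ?thesis .
qed

lemma sum_adj_rank:
  assumes "Is \<noteq> []"
  shows "int (\<Sum>k\<in>{1..<length Is}. adj_rank Is k) =
    2 * int (rank (sum_list Is)) - int (rank (hd Is)) - int (rank (last Is))"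
proof -
  have "1 \<le> length Is"
    using assms by (simp add: Suc_le_eq)
  then have "(\<Sum>k\<in>{1..<length Is}. adj_rank Is k) + rank (Is ! 0) + rank (Is ! (length Is - 1)) =
      2 * (\<Sum>k<length Is. rank (Is ! k))"
    unfolding adj_rank_def by (rule sum_adjacent_pairs)
  then have "int (\<Sum>k\<in>{1..<length Is}. adj_rank Is k) =
      2 * int (\<Sum>k<length Is. rank (Is ! k)) - int (rank (Is ! 0)) - int (rank (Is ! (length Is - 1)))"
    by linarith
  then show ?thesis
    using assms by (simp add: rank_sum_list sum_list_map_conv_sum_nth hd_conv_nth last_conv_nth)
qed

lemma adj_rank_append_left: "k < length I1 \<Longrightarrow> adj_rank (I1 @ I2) k = adj_rank I1 k"
  by (simp add: adj_rank_def nth_append less_imp_diff_less)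

lemma adj_rank_append_cut:
  "I1 \<noteq> [] \<Longrightarrow> I2 \<noteq> [] \<Longrightarrow> adj_rank (I1 @ I2) (length I1) = rank (last I1) + rank (hd I2)"
  by (simp add: adj_rank_def nth_append last_conv_nth hd_conv_nth)

lemma adj_rank_append_right: "1 \<le> j \<Longrightarrow> adj_rank (I1 @ I2) (length I1 + j) = adj_rank I2 j"
  by (cases j) (simp_all add: adj_rank_def nth_append)

lemma prefix_data_append_left: "k \<le> length I1 \<Longrightarrow> prefix_data (I1 @ I2) k = prefix_data I1 k"
  by (simp add: prefix_data_eq_sum_take)

lemma prefix_data_append_right:
  "j \<le> length I2 \<Longrightarrow> prefix_data (I1 @ I2) (length I1 + j) = sum_list I1 + prefix_data I2 j"
  by (simp add: prefix_data_eq_sum_take)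

lemma Mexp_with_append:
  assumes "I1 \<noteq> []" "I2 \<noteq> []"
  shows "Mexp_with fl (I1 @ I2) = Mexp_with fl I1 +
    int (rank (last I1) + rank (hd I2)) * fl (length I1) (sum_list I1) +
    Mexp_with (\<lambda>j Y. fl (length I1 + j) (sum_list I1 + Y)) I2"
proof -
  let ?c = "length I1"
  let ?g = "\<lambda>k. int (adj_rank (I1 @ I2) k) * fl k (prefix_data (I1 @ I2) k)"
  have "Mexp_with fl (I1 @ I2) = sum ?g {1..<?c} + ?g ?c + (\<Sum>j\<in>{1..<length I2}. ?g (?c + j))"
    unfolding Mexp_with_def using assms sum_atLeastLessThan_split_at[of ?c "length (I1 @ I2)" ?g]
    by (simp add: Suc_le_eq)
  also have "sum ?g {1..<?c} = Mexp_with fl I1"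
    unfolding Mexp_with_def
    by (intro sum.cong) (auto simp: adj_rank_append_left prefix_data_append_left)
  also have "?g ?c = int (rank (last I1) + rank (hd I2)) * fl ?c (sum_list I1)"
    using assms by (simp add: adj_rank_append_cut prefix_data_eq_sum_take)
  also have "(\<Sum>j\<in>{1..<length I2}. ?g (?c + j)) = Mexp_with (\<lambda>j Y. fl (?c + j) (sum_list I1 + Y)) I2"
    unfolding Mexp_with_def
    by (intro sum.cong) (auto simp: adj_rank_append_right prefix_data_append_right)
  finally show ?thesis .
qed

lemma Mexp_with_shift:
  "Mexp_with (\<lambda>k Y. e + fl k Y) Is = e * int (\<Sum>k\<in>{1..<length Is}. adj_rank Is k) + Mexp_with fl Is"
  by (simp add: Mexp_with_def algebra_simps sum.distrib sum_distrib_left)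

lemma floor_left_on_wall:
  assumes "real_of_int e = real (rank X) * lam - weight X"
  shows "floor_left lam X = e - 1" "floor_left lam (X + Y) = e + floor_left lam Y"
proof -
  show "floor_left lam X = e - 1"
    unfolding floor_left_def assms[symmetric] by simp
  have "real (rank (X + Y)) * lam - weight (X + Y) = real_of_int e + (real (rank Y) * lam - weight Y)"
    using assms by (simp add: rank_add weight_add algebra_simps)
  then show "floor_left lam (X + Y) = e + floor_left lam Y"
    unfolding floor_left_def by (metis add.commute ceiling_add_of_int diff_add_eq)
qed

lemma denoms_append_cut:
  assumes "I1 \<noteq> []" "I2 \<noteq> []"
  shows "denoms (I1 @ I2) (all_denoms (I1 @ I2) - {length I1}) = denoms I1 (all_denoms I1) * denoms I2 (all_denoms I2)"
proof -
  let ?u = "\<lambda>k. inverse (fls_X ^ adj_rank (I1 @ I2) k - 1 :: rat fls)"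
  have "denoms (I1 @ I2) (all_denoms (I1 @ I2) - {length I1}) =
      (\<Prod>k\<in>{1..<length I1}. ?u k) * (\<Prod>j\<in>{1..<length I2}. ?u (length I1 + j))"
    unfolding denoms_def using assms by (subst prod_atLeastLessThan_remove_split) (auto simp: Suc_le_eq)
  also have "(\<Prod>k\<in>{1..<length I1}. ?u k) = denoms I1 (all_denoms I1)"
    unfolding denoms_def by (intro prod.cong) (auto simp: adj_rank_append_left)
  also have "(\<Prod>j\<in>{1..<length I2}. ?u (length I1 + j)) = denoms I2 (all_denoms I2)"
    unfolding denoms_def by (intro prod.cong) (auto simp: adj_rank_append_right)
  finally show ?thesis .
qed

lemma M'exp_append_cut:
  assumes "I1 \<in> partitions X" "I2 \<in> partitions Y" "real_of_int e = real (rank X) * lam - weight X"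
  shows "M'exp S m (X + Y) (I1 @ I2) d + Mexp_with (floor_cut lam (length I1)) (I1 @ I2) =
    cross_exp X e Y (d - e) + (M'exp S m X I1 e + Mexp_with (\<lambda>_. floor_at lam) I1) +
    (M'exp S m Y I2 (d - e) + Mexp_with (\<lambda>_. floor_left lam) I2)"
proof -
  have ne: "I1 \<noteq> []" "I2 \<noteq> []" and X: "X = sum_list I1" and Y: "Y = sum_list I2"
    using assms by (auto simp: partitions_iff)
  have "Mexp_with (floor_cut lam (length I1)) (I1 @ I2) =
      Mexp_with (floor_cut lam (length I1)) I1 + int (rank (last I1) + rank (hd I2)) * floor_left lam X +
      Mexp_with (\<lambda>j Z. floor_left lam (X + Z)) I2"
    using Mexp_with_append[OF ne] by (simp add: floor_cut_def X)
  also have "Mexp_with (floor_cut lam (length I1)) I1 = Mexp_with (\<lambda>_. floor_at lam) I1"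
    unfolding Mexp_with_def by (intro sum.cong) (auto simp: floor_cut_def)
  also have "Mexp_with (\<lambda>j Z. floor_left lam (X + Z)) I2 =
      e * (2 * int (rank Y) - int (rank (hd I2)) - int (rank (last I2))) + Mexp_with (\<lambda>_. floor_left lam) I2"
    using Mexp_with_shift[of e "\<lambda>_. floor_left lam" I2] sum_adj_rank[OF ne(2)]
    by (simp add: floor_left_on_wall[OF assms(3)] Y)
  finally show ?thesis
    using ne by (simp add: M'exp_def cross_exp_def sigma_append rank_add floor_left_on_wall[OF assms(3)]
        algebra_simps flip: X Y)
qed

lemma Sterm_append_cut:
  assumes "I1 \<in> partitions X" "I2 \<in> partitions Y" "real_of_int e = real (rank X) * lam - weight X"
  shows "Sterm Q (X + Y) d (floor_cut lam (length I1)) (all_denoms (I1 @ I2) - {length I1}) (I1 @ I2) =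
    fls_X_intpow (cross_exp X e Y (d - e)) * Sterm Q X e (\<lambda>_. floor_at lam) (all_denoms I1) I1 *
      Sterm Q Y (d - e) (\<lambda>_. floor_left lam) (all_denoms I2) I2"
proof -
  have "I1 \<noteq> []" "I2 \<noteq> []"
    using assms by (auto simp: partitions_iff)
  then show ?thesis
    unfolding Sterm_def M'exp_append_cut[OF assms] denoms_append_cut[OF \<open>I1 \<noteq> []\<close> \<open>I2 \<noteq> []\<close>]
    by (simp only: map_append prod_list.append fls_X_intpow_times_fls_X_intpow[symmetric] ac_simps)
qed

lemma splits_at_iff:
  "(X, e) \<in> splits_at R lam \<longleftrightarrow>
     X \<in> subdata R \<and> datum (R - X) \<and> on_wall lam X \<and> e = floor_at lam X"
proof
  assume XS: "(X, e) \<in> splits_at R lam"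
  then show "X \<in> subdata R \<and> datum (R - X) \<and> on_wall lam X \<and> e = floor_at lam X"
    using splits_at_degree[OF XS] splits_at_floor[OF XS]
    by (auto simp: splits_at_def on_wall_def simp flip: splits_at_degree[OF XS])
next
  assume "X \<in> subdata R \<and> datum (R - X) \<and> on_wall lam X \<and> e = floor_at lam X"
  moreover from this have "real_of_int e = real (rank X) * lam - weight X"
    by (auto simp: on_wall_def floor_at_def elim!: Ints_cases)
  ultimately show "(X, e) \<in> splits_at R lam"
    using rank_mult_slope[of X e] rank_pos[of X]
    by (auto simp: splits_at_def subdata_def field_simps)
qed

lemma cut_points_eq_image:
  "Sigma (partitions R) (\<lambda>Is. {c\<in>all_denoms Is. on_wall lam (prefix_data Is c)}) =
   (\<lambda>((X, e), (I1, I2)). (I1 @ I2, length I1)) `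
     Sigma (splits_at R lam) (\<lambda>p. partitions (fst p) \<times> partitions (R - fst p))"
  (is "?C = ?f ` ?G")
proof (intro equalityI subsetI)
  fix p assume "p \<in> ?C"
  then obtain Is c where p: "p = (Is, c)" and P: "Is \<in> partitions R" and c: "1 \<le> c" "c < length Is"
    and wall: "on_wall lam (prefix_data Is c)"
    by auto
  define X where "X = sum_list (take c Is)"
  have R: "R = X + sum_list (drop c Is)"
    using P by (simp add: partitions_iff X_def flip: sum_list_append)
  then have rest: "R - X = sum_list (drop c Is)"
    by (metis add_diff_cancel_left')
  have P1: "take c Is \<in> partitions X"
    using P c by (auto simp: partitions_iff X_def dest: in_set_takeD)
  have P2: "drop c Is \<in> partitions (R - X)"
    using P c unfolding rest by (auto simp: partitions_iff dest: in_set_dropD)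
  then have "(X, floor_at lam X) \<in> splits_at R lam"
    using wall c prefix_data_subdata[OF P c(1) less_imp_le[OF c(2)]]
    by (auto simp: splits_at_iff prefix_data_eq_sum_take X_def partitions_iff intro: datum_sum_list)
  then have "((X, floor_at lam X), (take c Is, drop c Is)) \<in> ?G"
    using P1 P2 by simp
  moreover have "p = ?f ((X, floor_at lam X), (take c Is, drop c Is))"
    using p c by simp
  ultimately show "p \<in> ?f ` ?G"
    by blast
next
  fix p assume "p \<in> ?f ` ?G"
  then obtain X e I1 I2 where p: "p = (I1 @ I2, length I1)" and XS: "(X, e) \<in> splits_at R lam"
    and P1: "I1 \<in> partitions X" and P2: "I2 \<in> partitions (R - X)"
    by auto
  have "I1 @ I2 \<in> partitions R"
    using P1 P2 splits_at_add_diff[OF XS] by (auto simp: partitions_iff)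
  moreover have "prefix_data (I1 @ I2) (length I1) = X"
    using P1 by (simp add: prefix_data_eq_sum_take partitions_iff)
  ultimately show "p \<in> ?C"
    using p XS P1 P2 by (auto simp: splits_at_iff partitions_iff Suc_le_eq)
qed

lemma inj_on_cut_points:
  "inj_on (\<lambda>((X, e), (I1, I2)). (I1 @ I2, length I1))
     (Sigma (splits_at R lam) (\<lambda>p. partitions (fst p) \<times> partitions (R - fst p)))"
  by (auto simp: inj_on_def splits_at_iff partitions_iff)

lemma Slam_jump:
  "Slam S m \<alpha> Q R d lam - Slam_left Q R d lam =
    (\<Sum>(X, e)\<in>splits_at R lam. fls_X_intpow (cross_exp X e (R - X) (d - e)) *
       Slam S m \<alpha> Q X e lam * Slam_left Q (R - X) (d - e) lam)"
proof -
  let ?cut = "\<lambda>(Is, c). Sterm Q R d (floor_cut lam c) (all_denoms Is - {c}) Is"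
  let ?f = "\<lambda>((X, e), (I1, I2)). (I1 @ I2, length I1)"
  let ?G = "Sigma (splits_at R lam) (\<lambda>p. partitions (fst p) \<times> partitions (R - fst p))"
  have "Slam S m \<alpha> Q R d lam - Slam_left Q R d lam =
      (\<Sum>Is\<in>partitions R. \<Sum>c\<in>{c\<in>all_denoms Is. on_wall lam (prefix_data Is c)}.
         Sterm Q R d (floor_cut lam c) (all_denoms Is - {c}) Is)"
    unfolding Slam_eq Slam_left_def sum_subtractf[symmetric]
    by (intro sum.cong refl Sterm_minus_Sterm_left) (auto simp: partitions_iff)
  also have "\<dots> = sum ?cut (?f ` ?G)"
    unfolding cut_points_eq_image[symmetric] by (subst sum_Sigma_eq) (auto simp: finite_partitions)
  also have "\<dots> = sum (?cut \<circ> ?f) ?G"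
    by (rule sum.reindex[OF inj_on_cut_points])
  also have "\<dots> = (\<Sum>p\<in>splits_at R lam. \<Sum>q\<in>partitions (fst p) \<times> partitions (R - fst p). ?cut (?f (p, q)))"
    by (simp add: sum_Sigma_eq finite_splits_at finite_partitions)
  also have "\<dots> = (\<Sum>p\<in>splits_at R lam. fls_X_intpow (cross_exp (fst p) (snd p) (R - fst p) (d - snd p)) *
       Slam S m \<alpha> Q (fst p) (snd p) lam * Slam_left Q (R - fst p) (d - snd p) lam)"
  proof (intro sum.cong refl)
    fix p assume XS: "p \<in> splits_at R lam"
    obtain X e where p: "p = (X, e)"
      by (cases p)
    let ?c = "fls_X_intpow (cross_exp X e (R - X) (d - e))"
    let ?S1 = "\<lambda>I1. Sterm Q X e (\<lambda>_. floor_at lam) (all_denoms I1) I1"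
    let ?S2 = "\<lambda>I2. Sterm Q (R - X) (d - e) (\<lambda>_. floor_left lam) (all_denoms I2) I2"
    have pair: "Sterm Q R d (floor_cut lam (length I1)) (all_denoms (I1 @ I2) - {length I1}) (I1 @ I2) =
        ?c * (?S1 I1 * ?S2 I2)"
      if "I1 \<in> partitions X" "I2 \<in> partitions (R - X)" for I1 I2
      using that Sterm_append_cut[of I1 X I2 "R - X" e lam Q d] XS splits_at_degree
        splits_at_add_diff by (simp add: p mult.assoc)
    have "(\<Sum>q\<in>partitions X \<times> partitions (R - X). ?cut (?f (p, q))) =
        (\<Sum>(I1, I2)\<in>partitions X \<times> partitions (R - X). ?c * (?S1 I1 * ?S2 I2))"
      using pair by (intro sum.cong refl) (auto simp: p)
    also have "\<dots> = ?c * ((\<Sum>I1\<in>partitions X. ?S1 I1) * (\<Sum>I2\<in>partitions (R - X). ?S2 I2))"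
      by (subst sum_product) (simp only: sum_distrib_left sum.cartesian_product, simp add: split_beta)
    finally show "(\<Sum>q\<in>partitions (fst p) \<times> partitions (R - fst p). ?cut (?f (p, q))) =
        fls_X_intpow (cross_exp (fst p) (snd p) (R - fst p) (d - snd p)) *
          Slam S m \<alpha> Q (fst p) (snd p) lam * Slam_left Q (R - fst p) (d - snd p) lam"
      by (simp add: p Slam_eq Slam_left_def mult.assoc)
  qed
  also have "\<dots> = (\<Sum>(X, e)\<in>splits_at R lam. fls_X_intpow (cross_exp X e (R - X) (d - e)) *
       Slam S m \<alpha> Q X e lam * Slam_left Q (R - X) (d - e) lam)"
    by (simp add: split_beta)
  finally show ?thesis .
qed

lemma Slam_const:
  assumes "walls R \<inter> {a<..b} = {}" "a \<le> b"
  shows "Slam S m \<alpha> Q R d b = Slam S m \<alpha> Q R d a"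
proof -
  have "Mexp_with (\<lambda>_. floor_at b) Is = Mexp_with (\<lambda>_. floor_at a) Is" if "Is \<in> partitions R" for Is
    unfolding Mexp_with_def using floor_at_const[OF prefix_data_subdata[OF that] assms(2,1)]
    by (intro sum.cong) auto
  then show ?thesis
    unfolding Slam_eq Sterm_def by (intro sum.cong refl) simp
qed

lemma Slam_left_eq:
  assumes "left_stable R lam \<delta>" "0 < t" "t \<le> \<delta>" "Y \<in> subdata R"
  shows "Slam S m \<alpha> Q Y d (lam - t) = Slam_left Q Y d lam"
proof -
  have "floor_at (lam - t) (prefix_data Is k) = floor_left lam (prefix_data Is k)"
    if "Is \<in> partitions Y" "k \<in> {1..<length Is}" for Is k
    using assms that prefix_data_subdata[of Is Y k] subdata_trans unfolding left_stable_def by auto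
  then show ?thesis
    unfolding Slam_eq Slam_left_def Sterm_def Mexp_with_def by (intro sum.cong refl) auto
qed

section \<open>Large slopes\<close>

lemma Sterm_single: "datum R \<Longrightarrow> Sterm Q R d fl {} [R] = Q R"
  by (simp add: Sterm_def M'exp_def Mexp_with_def denoms_def sigma_single)

lemma Mexp_with_floor_at_lower:
  assumes "Is \<in> partitions R" "2 \<le> length Is"
  shows "int j - (\<Sum>k\<in>{1..<length Is}. int (adj_rank Is k) * \<lceil>weight (prefix_data Is k)\<rceil>)
           \<le> Mexp_with (\<lambda>_. floor_at (real j)) Is"
proof -
  have datum_prefix: "datum (prefix_data Is k)" if "k \<in> {1..<length Is}" for k
    using prefix_data_subdata[OF assms(1)] that by (simp add: subdata_def)
  have "int j - \<lceil>weight X\<rceil> \<le> floor_at (real j) X" if "datum X" for X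
  proof -
    have "int j - \<lceil>weight X\<rceil> \<le> \<lfloor>real j - weight X\<rfloor>"
      using le_of_int_ceiling[of "weight X"] by (simp add: le_floor_iff)
    also have "real j - weight X \<le> real (rank X) * real j - weight X"
      using rank_pos[OF that] by (simp add: mult_le_cancel_right1 Suc_le_eq)
    then have "\<lfloor>real j - weight X\<rfloor> \<le> floor_at (real j) X"
      unfolding floor_at_def by (rule floor_mono)
    finally show ?thesis .
  qed
  then have "(\<Sum>k\<in>{1..<length Is}. int (adj_rank Is k) * (int j - \<lceil>weight (prefix_data Is k)\<rceil>))
      \<le> Mexp_with (\<lambda>_. floor_at (real j)) Is"
    unfolding Mexp_with_def using datum_prefix by (intro sum_mono mult_left_mono) auto
  moreover have "int j \<le> (\<Sum>k\<in>{1..<length Is}. int (adj_rank Is k)) * int j"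
  proof -
    have "0 < adj_rank Is 1"
      using adj_rank_pos assms by (auto simp: partitions_iff)
    then have "1 \<le> (\<Sum>k\<in>{1..<length Is}. int (adj_rank Is k))"
      using member_le_sum[of 1 "{1..<length Is}" "\<lambda>k. int (adj_rank Is k)"] assms(2) by simp
    then show ?thesis
      by (simp add: mult_le_cancel_right1)
  qed
  moreover have "(\<Sum>k\<in>{1..<length Is}. int (adj_rank Is k) * (int j - \<lceil>weight (prefix_data Is k)\<rceil>)) =
      (\<Sum>k\<in>{1..<length Is}. int (adj_rank Is k)) * int j -
      (\<Sum>k\<in>{1..<length Is}. int (adj_rank Is k) * \<lceil>weight (prefix_data Is k)\<rceil>)"
    by (simp add: right_diff_distrib sum_subtractf sum_distrib_right)
  ultimately show ?thesis
    by linarith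
qed

lemma Sterm_eventually_fls_nth_eq_0:
  assumes "Is \<in> partitions R" "2 \<le> length Is"
  shows "\<forall>\<^sub>F j in sequentially. \<forall>k<N. fls_nth (Sterm Q R d (\<lambda>_. floor_at (real j)) (all_denoms Is) Is) k = 0"
proof -
  define C where "C = (\<Sum>k\<in>{1..<length Is}. int (adj_rank Is k) * \<lceil>weight (prefix_data Is k)\<rceil>)"
  have "filterlim (\<lambda>j. M'exp S m R Is d + Mexp_with (\<lambda>_. floor_at (real j)) Is) at_top sequentially"
    unfolding filterlim_at_top
  proof
    fix Z
    show "\<forall>\<^sub>F j in sequentially. Z \<le> M'exp S m R Is d + Mexp_with (\<lambda>_. floor_at (real j)) Is"
      using eventually_ge_at_top[of "nat (Z - M'exp S m R Is d + C)"]
    proof (rule eventually_mono)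
      fix j assume "nat (Z - M'exp S m R Is d + C) \<le> j"
      then show "Z \<le> M'exp S m R Is d + Mexp_with (\<lambda>_. floor_at (real j)) Is"
        using Mexp_with_floor_at_lower[OF assms, of j] unfolding C_def by linarith
    qed
  qed
  then show ?thesis
    unfolding Sterm_def mult.assoc by (rule eventually_fls_nth_X_intpow_times_eq_0)
qed

lemma Slam_eventually_fls_nth_eq:
  assumes "datum R"
  shows "\<forall>\<^sub>F j in sequentially. \<forall>k<N. fls_nth (Slam S m \<alpha> Q R d (real j)) k = fls_nth (Q R) k"
proof -
  have single: "[R] \<in> partitions R"
    using assms by (simp add: partitions_iff)
  have long: "2 \<le> length Is" if "Is \<in> partitions R - {[R]}" for Is
    using that by (cases Is rule: remdups_adj.cases) (auto simp: partitions_iff)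
  have "\<forall>\<^sub>F j in sequentially. \<forall>Is\<in>partitions R - {[R]}. \<forall>k<N.
      fls_nth (Sterm Q R d (\<lambda>_. floor_at (real j)) (all_denoms Is) Is) k = 0"
    using finite_partitions Sterm_eventually_fls_nth_eq_0 long by (intro eventually_ball_finite) auto
  then show ?thesis
  proof (rule eventually_mono)
    fix j assume "\<forall>Is\<in>partitions R - {[R]}. \<forall>k<N.
        fls_nth (Sterm Q R d (\<lambda>_. floor_at (real j)) (all_denoms Is) Is) k = 0"
    then show "\<forall>k<N. fls_nth (Slam S m \<alpha> Q R d (real j)) k = fls_nth (Q R) k"
      unfolding Slam_eq sum.remove[OF finite_partitions single]
      by (simp add: Sterm_single[OF assms] fls_nth_sum)
  qed
qed

lemma Qlam_tendsto:
  assumes "((\<lambda>(Is, ds). qterm S m Qd Is ds) has_sum QR) (Dset S m \<alpha> R d)"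
  shows "(\<lambda>j. Qlam Qd R d (real j)) \<longlonglongrightarrow> QR"
proof -
  have "filterlim (\<lambda>j. Dset_upto R d (real j)) (finite_subsets_at_top (Dset S m \<alpha> R d)) sequentially"
    unfolding filterlim_finite_subsets_at_top
  proof safe
    fix F assume F: "finite F" "F \<subseteq> Dset S m \<alpha> R d"
    have "\<forall>\<^sub>F j in sequentially. \<forall>(Is, ds)\<in>F. mu (hd Is) (hd ds) \<le> real j"
      using F(1) filterlim_real_sequentially
      by (intro eventually_ball_finite) (auto simp: filterlim_at_top)
    then show "\<forall>\<^sub>F j in sequentially. finite (Dset_upto R d (real j)) \<and> F \<subseteq> Dset_upto R d (real j) \<and>
        Dset_upto R d (real j) \<subseteq> Dset S m \<alpha> R d"
      by (rule eventually_mono) (use F(2) finite_Dset_upto in \<open>auto simp: Dset_upto_def\<close>)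
  qed
  then show ?thesis
    using assms filterlim_compose unfolding has_sum_def Qlam_def by blast
qed

section \<open>Induction on the rank\<close>

lemma jumps_agree:
  assumes IH: "\<And>X e l. rank X < rank R \<Longrightarrow> datum X \<Longrightarrow> mu X e \<le> l \<Longrightarrow> Qlam Qd X e l = Slam S m \<alpha> Q X e l"
    and datR: "datum R" and lt: "mu R d < lam"
    and stable: "left_stable R lam \<delta>" and t: "0 < t" "t \<le> \<delta>"
  shows "Qlam Qd R d lam - Qlam Qd R d (lam - t) = Slam S m \<alpha> Q R d lam - Slam S m \<alpha> Q R d (lam - t)"
proof -
  have term_eq:
    "(case p of (X, e) \<Rightarrow> fls_X_intpow (cross_exp X e (R - X) (d - e)) * Qd X e * Qlam Qd (R - X) (d - e) (lam - t)) =
     (case p of (X, e) \<Rightarrow> fls_X_intpow (cross_exp X e (R - X) (d - e)) * Slam S m \<alpha> Q X e lam *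
        Slam_left Q (R - X) (d - e) lam)"
    if "p \<in> splits_at R lam" for p
  proof -
    obtain X e where p: "p = (X, e)"
      by (cases p)
    then have XS: "(X, e) \<in> splits_at R lam"
      using that by simp
    have X: "X \<in> subdata R" "datum X" and Y: "R - X \<in> subdata R" "datum (R - X)" and muX: "mu X e = lam"
      using XS by (auto simp: splits_at_def subdata_def data_diff_le)
    have rank_R: "rank R = rank X + rank (R - X)"
      using splits_at_add_diff[OF XS] rank_add by metis
    then have "Qd X e = Slam S m \<alpha> Q X e lam"
      using IH[of X e lam] Qlam_at_slope[OF X(2), of Qd e] muX rank_pos[OF Y(2)] X by simp
    moreover have "mu (R - X) (d - e) \<le> lam - t"
      using slope_le_left[OF stable Y(1) splits_at_slope_rest_less[OF XS datR lt] t] .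
    then have "Qlam Qd (R - X) (d - e) (lam - t) = Slam_left Q (R - X) (d - e) lam"
      using IH[of "R - X"] rank_R rank_pos[OF X(2)] Y Slam_left_eq[OF stable t Y(1)] by simp
    ultimately show ?thesis
      by (simp add: p)
  qed
  have "Qlam Qd R d lam - Qlam Qd R d (lam - t) = Slam S m \<alpha> Q R d lam - Slam_left Q R d lam"
    unfolding Qlam_jump[OF stable t datR lt] Slam_jump by (rule sum.cong[OF refl term_eq])
  then show ?thesis
    using Slam_left_eq[OF stable t self_subdata[OF datR]] by simp
qed

lemma Qlam_minus_Slam_const:
  assumes IH: "\<And>X e l. rank X < rank R \<Longrightarrow> datum X \<Longrightarrow> mu X e \<le> l \<Longrightarrow> Qlam Qd X e l = Slam S m \<alpha> Q X e l"
    and datR: "datum R" and "mu R d \<le> lam"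
  shows "Qlam Qd R d lam - Slam S m \<alpha> Q R d lam = Qlam Qd R d (mu R d) - Slam S m \<alpha> Q R d (mu R d)"
  using finite_walls_Int
proof (rule step_function_constant[where f = "\<lambda>l. Qlam Qd R d l - Slam S m \<alpha> Q R d l"])
  show "Qlam Qd R d b - Slam S m \<alpha> Q R d b = Qlam Qd R d a - Slam S m \<alpha> Q R d a"
    if "a \<le> b" "walls R \<inter> {a<..b} = {}" for a b
    using that Qlam_const Slam_const by metis
  show "\<exists>\<delta>>0. \<forall>t. 0 < t \<and> t \<le> \<delta> \<longrightarrow>
      Qlam Qd R d (lam' - t) - Slam S m \<alpha> Q R d (lam' - t) = Qlam Qd R d lam' - Slam S m \<alpha> Q R d lam'"
    if "mu R d < lam'" for lam'
  proof -
    obtain \<delta> where stable: "left_stable R lam' \<delta>"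
      using ex_left_stable by blast
    then have "Qlam Qd R d (lam' - t) - Slam S m \<alpha> Q R d (lam' - t) = Qlam Qd R d lam' - Slam S m \<alpha> Q R d lam'"
      if "0 < t" "t \<le> \<delta>" for t
      using jumps_agree[OF IH datR \<open>mu R d < lam'\<close> stable that] by (simp add: algebra_simps)
    then show ?thesis
      using stable by (auto simp: left_stable_def)
  qed
qed (use assms in auto)

lemma Qlam_eq_Slam:
  assumes hyp: "\<And>R' d'. datum R' \<Longrightarrow> ((\<lambda>(Is, ds). qterm S m Qd Is ds) has_sum Q R') (Dset S m \<alpha> R' d')"
    and "datum R" "mu R d \<le> lam"
  shows "Qlam Qd R d lam = Slam S m \<alpha> Q R d lam"
  using assms(2,3)
proof (induction "rank R" arbitrary: R d lam rule: less_induct)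
  case less
  define D where "D = Qlam Qd R d (mu R d) - Slam S m \<alpha> Q R d (mu R d)"
  have const: "Qlam Qd R d l - Slam S m \<alpha> Q R d l = D" if "mu R d \<le> l" for l
    unfolding D_def using less that by (intro Qlam_minus_Slam_const) auto
  have "fls_nth D k = 0" for k
  proof -
    have "\<forall>\<^sub>F j in sequentially. mu R d \<le> real j"
      using filterlim_real_sequentially by (simp add: filterlim_at_top)
    moreover have "\<forall>\<^sub>F j in sequentially. \<forall>k'<k + 1. fls_nth (Qlam Qd R d (real j)) k' = fls_nth (Q R) k'"
      by (rule LIMSEQ_imp_eventually_fls_nth_eq[OF Qlam_tendsto[OF hyp[OF less.prems(1)]]])
    moreover have "\<forall>\<^sub>F j in sequentially. \<forall>k'<k + 1. fls_nth (Slam S m \<alpha> Q R d (real j)) k' = fls_nth (Q R) k'"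
      by (rule Slam_eventually_fls_nth_eq[OF less.prems(1)])
    ultimately have "\<forall>\<^sub>F j in sequentially. mu R d \<le> real j \<and>
        fls_nth (Qlam Qd R d (real j)) k = fls_nth (Q R) k \<and> fls_nth (Slam S m \<alpha> Q R d (real j)) k = fls_nth (Q R) k"
      by eventually_elim auto
    then obtain j where "mu R d \<le> real j" "fls_nth (Qlam Qd R d (real j)) k = fls_nth (Q R) k"
      "fls_nth (Slam S m \<alpha> Q R d (real j)) k = fls_nth (Q R) k"
      by (auto simp: eventually_sequentially)
    then show ?thesis
      using const[of "real j"] by (metis diff_self fls_minus_nth fls_zero_nth)
  qed
  then have "D = 0"
    by (simp add: fls_eq_iff)
  then show ?case
    using const[OF less.prems(2)] by simp
qed

end

theorem theorem5p6:
  fixes S :: "'p set" and m :: "'p \<Rightarrow> nat" and \<alpha> :: "'p \<Rightarrow> nat \<Rightarrow> real"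
    and Qd :: "'p data \<Rightarrow> int \<Rightarrow> rat fls" and Q :: "'p data \<Rightarrow> rat fls"
    and R :: "'p data" and d :: int and lam :: real
  assumes "finite S" and "S \<noteq> {}"
    and "\<forall>P\<in>S. 1 \<le> m P"
    and "\<forall>P\<in>S. 0 \<le> \<alpha> P 1"
    and "\<forall>P\<in>S. \<forall>i j. 1 \<le> i \<longrightarrow> i < j \<longrightarrow> j \<le> m P \<longrightarrow> \<alpha> P i < \<alpha> P j"
    and "\<forall>P\<in>S. \<alpha> P (m P) < 1"
    and hyp: "\<forall>R' d'. is_data S m R' \<longrightarrow>
               ((\<lambda>(Is, ds). qterm S m Qd Is ds) has_sum Q R') (Dset S m \<alpha> R' d')"
    and "is_data S m R"
    and "(real_of_int d + dalpha S m \<alpha> R) / real (dn S m R) \<le> lam"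
  shows "((\<lambda>(Is, ds). qterm S m Qd Is ds) has_sum Slam S m \<alpha> Q R d lam)
           {(Is, ds) \<in> Dset S m \<alpha> R d. slope S m \<alpha> (hd Is) (hd ds) \<le> lam}"
proof -
  interpret data_space S m \<alpha>
    using assms(1,2) by unfold_locales
  have "Qlam Qd R d lam = Slam S m \<alpha> Q R d lam"
    using hyp assms(8,9) by (intro Qlam_eq_Slam) (auto simp: slope_def)
  then show ?thesis
    using finite_Dset_upto[of R d lam] unfolding Qlam_def Dset_upto_def
    by (intro has_sum_finiteI) auto
qed

end
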